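(* Let $n\ge 1$, $d_1,\dots,d_n\ge 1$, $L_i\in\mathbb{C}^{d_i\times d_i}$ ($i=1,\dots,n$) and $C_{i,i-1}\in\mathbb{C}^{d_i\times d_{i-1}}$ ($i=2,\dots,n$). Assume: (i) each $L_i$ is invertible and diagonalizable, $L_iV_i=V_i\Lambda_i$ with $V_i$ invertible and $\Lambda_i=\mathrm{diag}(\lambda_{i,1},\dots,\lambda_{i,d_i})$; (ii) $\sigma(L_i)\cap\sigma(L_j)=\emptyset$ for all $i\neq j$; (iii) $\|L_1\|<\|L_2\|<\cdots<\|L_n\|\le 1$. Let $\mathsf{NonLin}$ be the nonlinear chained cascade map $\mathsf{NonLin}(x_1,\dots,x_n)=(L_1x_1+N_1(x_1),\;L_2x_2+C_{2,1}x_1+N_2(x_1,x_2),\;\dots,\;L_nx_n+C_{n,n-1}x_{n-1}+N_n(x_{n-1},x_n))$ for some maps $N_1:\mathbb{C}^{d_1}\to\mathbb{C}^{d_1}$, $N_i:\mathbb{C}^{d_{i-1}}\times\mathbb{C}^{d_i}\to\mathbb{C}^{d_i}$, and let $\tau:\mathbb{C}^{d_1}\times\cdots\times\mathbb{C}^{d_n}\to\mathbb{C}^{d_1}\times\cdots\times\mathbb{C}^{d_n}$ be a topological conjugacy (homeomorphism) with $\mathsf{Lin}=\tau^{-1}\circ\mathsf{NonLin}\circ\tau$. Then for every $y\in\mathbb{C}^{d_1}\times\cdots\times\mathbb{C}^{d_n}$, $$\lim_{t\to\infty}\Big\|\mathsf{NonLin}^{\circ t}(y)-(\tau\circ\mathsf{Nom}\circ\tau^{-1})^{\circ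 t}\big((\tau\circ\mathsf{pert}\circ\tau^{-1})(y)\big)\Big\|_\times=0.$$
   Context: Each $\mathbb{C}^{d_i}$ carries a fixed norm $\|\cdot\|$, matrices carry the induced operator norm, and $\|(x_1,\dots,x_n)\|_\times=\sum_i\|x_i\|$. $\mathsf{Lin}(x_1,\dots,x_n)=(L_1x_1,\;L_2x_2+C_{2,1}x_1,\;\dots,\;L_nx_n+C_{n,n-1}x_{n-1})$, $\mathsf{Nom}(x_1,\dots,x_n)=(L_1x_1,\dots,L_nx_n)$, and $\mathsf{F}^{\circ t}$ is the $t$-fold iterate. Matrices $D_{i,j}$ ($1\le j\le i\le n$) are defined recursively in $i$: $D_{i,i}=I_{d_i}$; for $i\ge 2$, $1\le j\le i-1$, $[\tilde C_{i,j}]_{\ell,m}=[V_i^{-1}C_{i,i-1}D_{i-1,j}V_j]_{\ell,m}(1-\lambda_{j,m}/\lambda_{i,\ell})^{-1}$ and $D_{i,j}=L_i^{-1}V_i\tilde C_{i,j}V_j^{-1}$. Define $\mathsf{pert}_1(x_1)=x_1$, $\mathsf{pert}_i(x_1,\dots,x_i)=x_i+\sum_{j=1}^{i-1}(-1)^{i-1-j}D_{i,j}\mathsf{pert}_j(x_1,\dots,x_j)$ for $i\ge2$, and $\mathsf{pert}(x)=(\mathsf{pert}_1(x_1),\dots,\mathsf{pert}_n(x_1,\dots,x_n))$. *)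

theory Defs
  imports Complex_Main "Jordan_Normal_Form.Spectral_Radius"
begin

(* Convention: the state x = (x_1,...,x_n) is a function x :: nat => complex vec with
   x i in C^{d i} for 1 <= i <= n and x i = the empty vector (dimension 0) for other i.
   Matrix/vector indices inside C^{d_i} are 0-based (JNF convention). *)

definition state_space :: "nat \<Rightarrow> (nat \<Rightarrow> nat) \<Rightarrow> (nat \<Rightarrow> complex vec) set" where
  "state_space n d = {x. (\<forall>i\<in>{1..n}. x i \<in> carrier_vec (d i)) \<and>
                         (\<forall>i. i \<notin> {1..n} \<longrightarrow> x i = vec 0 (\<lambda>_. 0))}"

definition is_vnorm :: "nat \<Rightarrow> (complex vec \<Rightarrow> real) \<Rightarrow> bool" where
  "is_vnorm d N \<longleftrightarrow>
     (\<forall>x\<in>carrier_vec d. 0 \<le> N x \<and> (N x = 0 \<longleftrightarrow> x = 0\<^sub>v d)) \<and>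
     (\<forall>x\<in>carrier_vec d. \<forall>a. N (a \<cdot>\<^sub>v x) = cmod a * N x) \<and>
     (\<forall>x\<in>carrier_vec d. \<forall>y\<in>carrier_vec d. N (x + y) \<le> N x + N y)"

definition op_norm :: "nat \<Rightarrow> (complex vec \<Rightarrow> real) \<Rightarrow> complex mat \<Rightarrow> real" where
  "op_norm d N A = (SUP x\<in>{x\<in>carrier_vec d. N x \<le> 1}. N (A *\<^sub>v x))"

definition prod_norm :: "nat \<Rightarrow> (nat \<Rightarrow> complex vec \<Rightarrow> real) \<Rightarrow> (nat \<Rightarrow> complex vec) \<Rightarrow> real" where
  "prod_norm n N x = (\<Sum>i=1..n. N i (x i))"

definition state_diff :: "(nat \<Rightarrow> complex vec) \<Rightarrow> (nat \<Rightarrow> complex vec) \<Rightarrow> nat \<Rightarrow> complex vec" where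
  "state_diff x y = (\<lambda>i. x i - y i)"

definition cont_state :: "nat \<Rightarrow> (nat \<Rightarrow> nat) \<Rightarrow> (nat \<Rightarrow> complex vec \<Rightarrow> real)
    \<Rightarrow> ((nat \<Rightarrow> complex vec) \<Rightarrow> (nat \<Rightarrow> complex vec)) \<Rightarrow> bool" where
  "cont_state n d N f \<longleftrightarrow>
     (\<forall>x\<in>state_space n d. \<forall>e>0. \<exists>\<delta>>0. \<forall>y\<in>state_space n d.
        prod_norm n N (state_diff y x) < \<delta> \<longrightarrow> prod_norm n N (state_diff (f y) (f x)) < e)"

definition homeo_state :: "nat \<Rightarrow> (nat \<Rightarrow> nat) \<Rightarrow> (nat \<Rightarrow> complex vec \<Rightarrow> real)
    \<Rightarrow> ((nat \<Rightarrow> complex vec) \<Rightarrow> (nat \<Rightarrow> complex vec))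
    \<Rightarrow> ((nat \<Rightarrow> complex vec) \<Rightarrow> (nat \<Rightarrow> complex vec)) \<Rightarrow> bool" where
  "homeo_state n d N tau tinv \<longleftrightarrow>
     (\<forall>x\<in>state_space n d. tau x \<in> state_space n d \<and> tinv x \<in> state_space n d \<and>
                          tinv (tau x) = x \<and> tau (tinv x) = x) \<and>
     cont_state n d N tau \<and> cont_state n d N tinv"

definition mat_inv :: "complex mat \<Rightarrow> complex mat" where
  "mat_inv A = (SOME B. B \<in> carrier_mat (dim_row A) (dim_row A) \<and>
                        A * B = 1\<^sub>m (dim_row A) \<and> B * A = 1\<^sub>m (dim_row A))"

(* Lin, Nom, NonLin; C i stands for C_{i,i-1} *)
definition Lin_map :: "nat \<Rightarrow> (nat \<Rightarrow> complex mat) \<Rightarrow> (nat \<Rightarrow> complex mat)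
    \<Rightarrow> (nat \<Rightarrow> complex vec) \<Rightarrow> nat \<Rightarrow> complex vec" where
  "Lin_map n L C x = (\<lambda>i. if i = 1 \<and> 1 \<le> n then L 1 *\<^sub>v x 1
                          else if 2 \<le> i \<and> i \<le> n then L i *\<^sub>v x i + C i *\<^sub>v x (i - 1)
                          else x i)"

definition Nom_map :: "nat \<Rightarrow> (nat \<Rightarrow> complex mat) \<Rightarrow> (nat \<Rightarrow> complex vec) \<Rightarrow> nat \<Rightarrow> complex vec" where
  "Nom_map n L x = (\<lambda>i. if 1 \<le> i \<and> i \<le> n then L i *\<^sub>v x i else x i)"

definition NonLin_map :: "nat \<Rightarrow> (nat \<Rightarrow> complex mat) \<Rightarrow> (nat \<Rightarrow> complex mat)
    \<Rightarrow> (complex vec \<Rightarrow> complex vec) \<Rightarrow> (nat \<Rightarrow> complex vec \<Rightarrow> complex vec \<Rightarrow> complex vec)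
    \<Rightarrow> (nat \<Rightarrow> complex vec) \<Rightarrow> nat \<Rightarrow> complex vec" where
  "NonLin_map n L C N1 Nf x = (\<lambda>i. if i = 1 \<and> 1 \<le> n then L 1 *\<^sub>v x 1 + N1 (x 1)
                          else if 2 \<le> i \<and> i \<le> n then
                             L i *\<^sub>v x i + C i *\<^sub>v x (i - 1) + Nf i (x (i - 1)) (x i)
                          else x i)"

(* The matrices D_{i,j}, 1 <= j <= i; lam i l is the l-th (0-based) eigenvalue of L i *)
fun Dmat :: "(nat \<Rightarrow> nat) \<Rightarrow> (nat \<Rightarrow> complex mat) \<Rightarrow> (nat \<Rightarrow> complex mat) \<Rightarrow> (nat \<Rightarrow> complex mat)
    \<Rightarrow> (nat \<Rightarrow> nat \<Rightarrow> complex) \<Rightarrow> nat \<Rightarrow> nat \<Rightarrow> complex mat" where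
  "Dmat d L C V lam 0 j = 1\<^sub>m (d 0)"
| "Dmat d L C V lam (Suc k) j =
     (if j = Suc k then 1\<^sub>m (d (Suc k))
      else (let i = Suc k;
                M = mat_inv (V i) * C i * Dmat d L C V lam k j * V j;
                Ct = mat (d i) (d j) (\<lambda>(l, m). M $$ (l, m) / (1 - lam j m / lam i l))
            in mat_inv (L i) * V i * Ct * mat_inv (V j)))"

(* pert_vals k gives pert_j(x_1..x_j) for all j <= k *)
fun pert_vals :: "(nat \<Rightarrow> nat) \<Rightarrow> (nat \<Rightarrow> complex mat) \<Rightarrow> (nat \<Rightarrow> complex mat) \<Rightarrow> (nat \<Rightarrow> complex mat)
    \<Rightarrow> (nat \<Rightarrow> nat \<Rightarrow> complex) \<Rightarrow> (nat \<Rightarrow> complex vec) \<Rightarrow> nat \<Rightarrow> nat \<Rightarrow> complex vec" where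
  "pert_vals d L C V lam x 0 = (\<lambda>j. x j)"
| "pert_vals d L C V lam x (Suc k) =
     (pert_vals d L C V lam x k)(Suc k :=
        foldr (\<lambda>j acc. acc + ((-1) ^ (k - j)) \<cdot>\<^sub>v (Dmat d L C V lam (Suc k) j *\<^sub>v pert_vals d L C V lam x k j))
              [1..<Suc k] (x (Suc k)))"

definition pert_map :: "nat \<Rightarrow> (nat \<Rightarrow> nat) \<Rightarrow> (nat \<Rightarrow> complex mat) \<Rightarrow> (nat \<Rightarrow> complex mat)
    \<Rightarrow> (nat \<Rightarrow> complex mat) \<Rightarrow> (nat \<Rightarrow> nat \<Rightarrow> complex) \<Rightarrow> (nat \<Rightarrow> complex vec) \<Rightarrow> nat \<Rightarrow> complex vec" where
  "pert_map n d L C V lam x = (\<lambda>i. if 1 \<le> i \<and> i \<le> n then pert_vals d L C V lam x i i else x i)"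

end

(*
  Conjugation by tau reduces the claim to the linear cascade Lin.  There the matrices D_{i,j}
  solve the Sylvester equations  L_i D_{i,j} = D_{i,j} L_j + C_{i,i-1} D_{i-1,j},  which in
  eigenbases of L_i and L_j decouple into scalar equations, solvable because the spectra are
  disjoint.  This yields  Lin = pert^-1 o Nom o pert.  Hence block i of Lin^t x differs from
  block i of Nom^t (pert x) only by terms D_{i,j} Nom^t (pert x)_j with j < i, which tend to
  zero because every eigenvalue of L_j (j < n) has modulus at most ||L_j|| < ||L_n|| <= 1; for
  the same reason all these trajectories are bounded.  Finally, a continuous map preserves
  asymptotic equality of bounded sequences, by compactness of bounded sets in finite dimension.
*)

theory Submission
  imports Defs
begin

section \<open>Convergent subsequences and norms on complex vectors\<close>

lemma complex_bounded_convergent_subseq: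
  fixes f :: "nat \<Rightarrow> complex"
  assumes "\<forall>t. cmod (f t) \<le> B"
  shows "\<exists>r l. strict_mono r \<and> (\<lambda>t. f (r t)) \<longlonglongrightarrow> l"
proof -
  have bounded_parts: "Bseq (\<lambda>t. Re (f (r t)))" "Bseq (\<lambda>t. Im (f (r t)))" for r
    using assms abs_Re_le_cmod abs_Im_le_cmod order_trans
    by (intro BseqI'[of _ B]; fastforce)+
  obtain r where r: "strict_mono r" "monoseq (\<lambda>t. Re (f (r t)))"
    using seq_monosub[of "\<lambda>t. Re (f t)"] by blast
  obtain s where s: "strict_mono s" "monoseq (\<lambda>t. Im (f (r (s t))))"
    using seq_monosub[of "\<lambda>t. Im (f (r t))"] by blast
  obtain a where a: "(\<lambda>t. Re (f (r t))) \<longlonglongrightarrow> a"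
    using Bseq_monoseq_convergent[OF bounded_parts(1) r(2)] by (auto simp: convergent_def)
  obtain b where b: "(\<lambda>t. Im (f (r (s t)))) \<longlonglongrightarrow> b"
    using Bseq_monoseq_convergent[OF bounded_parts(2)[of "r \<circ> s"]] s(2)
    by (auto simp: convergent_def)
  have "(\<lambda>t. Re (f (r (s t)))) \<longlonglongrightarrow> a"
    using LIMSEQ_subseq_LIMSEQ[OF a s(1)] by (simp add: comp_def)
  hence "(\<lambda>t. Complex (Re (f (r (s t)))) (Im (f (r (s t))))) \<longlonglongrightarrow> Complex a b"
    using b by (rule tendsto_Complex)
  moreover have "strict_mono (\<lambda>t. r (s t))"
    using strict_mono_o[OF r(1) s(1)] by (simp add: comp_def)
  ultimately show ?thesis by auto
qed

lemma finite_bounded_convergent_subseq: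
  fixes f :: "nat \<Rightarrow> 'a \<Rightarrow> complex"
  assumes "finite I" "\<forall>i\<in>I. \<exists>B. \<forall>t. cmod (f t i) \<le> B"
  shows "\<exists>r. strict_mono r \<and> (\<forall>i\<in>I. \<exists>l. (\<lambda>t. f (r t) i) \<longlonglongrightarrow> l)"
  using assms
proof (induction I rule: finite_induct)
  case empty
  show ?case using strict_mono_id by blast
next
  case (insert i I)
  then obtain r where r: "strict_mono r" "\<forall>j\<in>I. \<exists>l. (\<lambda>t. f (r t) j) \<longlonglongrightarrow> l"
    by blast
  obtain B where "\<forall>t. cmod (f t i) \<le> B" using insert.prems by blast
  then obtain s l where s: "strict_mono s" "(\<lambda>t. f (r (s t)) i) \<longlonglongrightarrow> l"
    using complex_bounded_convergent_subseq[of "\<lambda>t. f (r t) i"] by blast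
  have "\<exists>l. (\<lambda>t. f (r (s t)) j) \<longlonglongrightarrow> l" if "j \<in> I" for j
    using r(2) that LIMSEQ_subseq_LIMSEQ[OF _ s(1)] by (fastforce simp: comp_def)
  moreover have "strict_mono (\<lambda>t. r (s t))"
    using strict_mono_o[OF r(1) s(1)] by (simp add: comp_def)
  ultimately show ?case using s(2) by blast
qed

definition l1_norm :: "complex vec \<Rightarrow> real" where
  "l1_norm x = (\<Sum>k<dim_vec x. cmod (x $ k))"

lemma l1_norm_eq_0_iff: "x \<in> carrier_vec d \<Longrightarrow> l1_norm x = 0 \<longleftrightarrow> x = 0\<^sub>v d"
  unfolding l1_norm_def by (auto simp: sum_nonneg_eq_0_iff vec_eq_iff)

lemma mult_mat_vec_index_sum:
  assumes "A \<in> carrier_mat m n" "x \<in> carrier_vec n" "k < m"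
  shows "(A *\<^sub>v x) $ k = (\<Sum>l<n. A $$ (k, l) * x $ l)"
  using assms by (auto simp: scalar_prod_def lessThan_atLeast0 intro!: sum.cong)

lemma l1_norm_mult_mat_vec_le:
  fixes A :: "complex mat"
  assumes A: "A \<in> carrier_mat m n" and x: "x \<in> carrier_vec n"
  shows "l1_norm (A *\<^sub>v x) \<le> (\<Sum>k<m. \<Sum>l<n. cmod (A $$ (k, l))) * l1_norm x"
proof -
  have "cmod ((A *\<^sub>v x) $ k) \<le> (\<Sum>l<n. cmod (A $$ (k, l)) * cmod (x $ l))" if "k < m" for k
    unfolding mult_mat_vec_index_sum[OF A x that] norm_mult[symmetric] by (rule norm_sum)
  hence "l1_norm (A *\<^sub>v x) \<le> (\<Sum>k<m. \<Sum>l<n. cmod (A $$ (k, l)) * cmod (x $ l))"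
    unfolding l1_norm_def using A by (auto intro!: sum_mono)
  also have "\<dots> \<le> (\<Sum>k<m. \<Sum>l<n. cmod (A $$ (k, l)) * l1_norm x)"
    unfolding l1_norm_def using x by (intro sum_mono mult_left_mono member_le_sum) auto
  finally show ?thesis by (simp add: sum_distrib_right)
qed

context
  fixes d :: nat and N :: "complex vec \<Rightarrow> real"
  assumes N: "is_vnorm d N"
begin

lemma vnorm_nonneg: "x \<in> carrier_vec d \<Longrightarrow> 0 \<le> N x"
  and vnorm_eq_0_iff: "x \<in> carrier_vec d \<Longrightarrow> N x = 0 \<longleftrightarrow> x = 0\<^sub>v d"
  and vnorm_smult: "x \<in> carrier_vec d \<Longrightarrow> N (a \<cdot>\<^sub>v x) = cmod a * N x"
  and vnorm_triangle: "x \<in> carrier_vec d \<Longrightarrow> y \<in> carrier_vec d \<Longrightarrow> N (x + y) \<le> N x + N y"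
  using N unfolding is_vnorm_def by auto

lemma vnorm_minus_commute:
  assumes "x \<in> carrier_vec d" "y \<in> carrier_vec d"
  shows "N (x - y) = N (y - x)"
proof -
  have "y - x = (-1) \<cdot>\<^sub>v (x - y)" using assms by (intro eq_vecI) auto
  thus ?thesis using vnorm_smult[of "x - y" "-1"] assms by simp
qed

lemma vnorm_diff_triangle:
  assumes "x \<in> carrier_vec d" "y \<in> carrier_vec d" "z \<in> carrier_vec d"
  shows "N (x - z) \<le> N (x - y) + N (y - z)"
proof -
  have "x - z = (x - y) + (y - z)" using assms by (intro eq_vecI) auto
  thus ?thesis using vnorm_triangle[of "x - y" "y - z"] assms by simp
qed

lemma vnorm_le_l1_norm: "\<exists>K\<ge>0. \<forall>x\<in>carrier_vec d. N x \<le> K * l1_norm x"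
proof -
  define K where "K = (\<Sum>k<d. N (unit_vec d k))"
  have "N x \<le> K * l1_norm x" if x: "x \<in> carrier_vec d" for x
  proof -
    define P where "P m = vec d (\<lambda>k. if k < m then x $ k else 0)" for m
    have "N (P m) \<le> (\<Sum>k<m. cmod (x $ k) * N (unit_vec d k))" if "m \<le> d" for m
      using that
    proof (induction m)
      case 0
      have "P 0 = 0\<^sub>v d" unfolding P_def by (intro eq_vecI) auto
      thus ?case using vnorm_eq_0_iff[of "0\<^sub>v d"] by simp
    next
      case (Suc m)
      have "P (Suc m) = P m + (x $ m) \<cdot>\<^sub>v unit_vec d m"
        unfolding P_def using Suc.prems by (intro eq_vecI) (auto simp: less_Suc_eq)
      moreover have "P m \<in> carrier_vec d" unfolding P_def by simp
      ultimately have "N (P (Suc m)) \<le> N (P m) + cmod (x $ m) * N (unit_vec d m)"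
        using vnorm_triangle[of "P m" "(x $ m) \<cdot>\<^sub>v unit_vec d m"]
          vnorm_smult[OF unit_vec_carrier] by simp
      thus ?case using Suc by simp
    qed
    moreover have "P d = x" unfolding P_def using x by (intro eq_vecI) auto
    ultimately have "N x \<le> (\<Sum>k<d. cmod (x $ k) * N (unit_vec d k))" by force
    also have "\<dots> \<le> (\<Sum>k<d. cmod (x $ k) * K)"
      unfolding K_def using vnorm_nonneg
      by (intro sum_mono mult_left_mono member_le_sum) auto
    finally show ?thesis using x by (simp add: l1_norm_def sum_distrib_left mult_ac)
  qed
  moreover have "K \<ge> 0" unfolding K_def using vnorm_nonneg by (simp add: sum_nonneg)
  ultimately show ?thesis by blast
qed

lemma vnorm_tendsto_0_coordinatewise:
  assumes "\<And>t. y t \<in> carrier_vec d" "z \<in> carrier_vec d"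
    and "\<forall>k<d. (\<lambda>t. y t $ k) \<longlonglongrightarrow> z $ k"
  shows "(\<lambda>t. N (y t - z)) \<longlonglongrightarrow> 0"
proof -
  obtain K where K: "\<forall>x\<in>carrier_vec d. N x \<le> K * l1_norm x"
    using vnorm_le_l1_norm by blast
  show ?thesis
  proof (rule real_tendsto_sandwich[where f = "\<lambda>_. 0" and h = "\<lambda>t. K * l1_norm (y t - z)"])
    have "(\<lambda>t. K * (\<Sum>k<d. cmod (y t $ k - z $ k))) \<longlonglongrightarrow> K * (\<Sum>k<d. cmod (z $ k - z $ k))"
      using assms(3) by (intro tendsto_intros) auto
    moreover have "l1_norm (y t - z) = (\<Sum>k<d. cmod (y t $ k - z $ k))" for t
      using assms(1,2) by (simp add: l1_norm_def)
    ultimately show "(\<lambda>t. K * l1_norm (y t - z)) \<longlonglongrightarrow> 0" by simp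
    show "\<forall>\<^sub>F t in sequentially. N (y t - z) \<le> K * l1_norm (y t - z)"
      using K assms(1,2) by simp
    show "\<forall>\<^sub>F t in sequentially. 0 \<le> N (y t - z)"
      using vnorm_nonneg assms(1,2) by simp
  qed simp
qed

lemma l1_unit_vnorm_not_tendsto_0:
  assumes y: "\<And>t. y t \<in> carrier_vec d" "\<And>t. l1_norm (y t) = 1"
  shows "\<not> (\<lambda>t. N (y t)) \<longlonglongrightarrow> 0"
proof
  assume lim_y: "(\<lambda>t. N (y t)) \<longlonglongrightarrow> 0"
  have "cmod (y t $ k) \<le> 1" if "k < d" for t k
    using y[of t] that unfolding l1_norm_def
    by (metis carrier_vecD finite_lessThan lessThan_iff member_le_sum norm_ge_zero)
  then obtain r where r: "strict_mono r" "\<forall>k\<in>{..<d}. \<exists>l. (\<lambda>t. y (r t) $ k) \<longlonglongrightarrow> l"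
    using finite_bounded_convergent_subseq[of "{..<d}" "\<lambda>t k. y t $ k"] by blast
  then obtain l where l: "\<And>k. k < d \<Longrightarrow> (\<lambda>t. y (r t) $ k) \<longlonglongrightarrow> l k"
    by (metis lessThan_iff)
  define z where "z = vec d l"
  have z: "z \<in> carrier_vec d" unfolding z_def by simp
  have "(\<lambda>t. \<Sum>k<d. cmod (y (r t) $ k)) \<longlonglongrightarrow> (\<Sum>k<d. cmod (l k))"
    by (intro tendsto_intros l) simp
  moreover have "(\<Sum>k<d. cmod (y (r t) $ k)) = 1" for t
    using y[of "r t"] by (simp add: l1_norm_def)
  ultimately have "l1_norm z = 1" by (simp add: z_def l1_norm_def LIMSEQ_const_iff)
  have "N z \<le> N (z - y (r t)) + N (y (r t))" for t
  proof -
    have "z = (z - y (r t)) + y (r t)" using z y(1)[of "r t"] by (intro eq_vecI) auto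
    thus ?thesis using vnorm_triangle[of "z - y (r t)" "y (r t)"] z y(1)[of "r t"] by simp
  qed
  hence "N z \<le> N (y (r t) - z) + N (y (r t))" for t
    using vnorm_minus_commute[OF z y(1)] by simp
  moreover have "(\<lambda>t. N (y (r t) - z) + N (y (r t))) \<longlonglongrightarrow> 0"
    using tendsto_add[OF vnorm_tendsto_0_coordinatewise[OF y(1) z]
        LIMSEQ_subseq_LIMSEQ[OF lim_y r(1)]] l
    by (simp add: z_def comp_def)
  ultimately have "N z \<le> 0" by (intro LIMSEQ_le_const[of _ 0]) auto
  hence "z = 0\<^sub>v d" using vnorm_nonneg[OF z] vnorm_eq_0_iff[OF z] by simp
  thus False using \<open>l1_norm z = 1\<close> l1_norm_eq_0_iff[OF z] by simp
qed

lemma l1_norm_le_vnorm: "\<exists>c>0. \<forall>x\<in>carrier_vec d. l1_norm x \<le> c * N x"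
proof (rule ccontr)
  assume "\<not> ?thesis"
  hence bad: "\<forall>c>0. \<exists>x\<in>carrier_vec d. c * N x < l1_norm x" by (auto simp: not_le)
  have "\<exists>y\<in>carrier_vec d. l1_norm y = 1 \<and> N y < 1 / (real m + 1)" for m
  proof -
    have "real m + 1 > 0" by simp
    with bad obtain x where x: "x \<in> carrier_vec d" "(real m + 1) * N x < l1_norm x"
      by (meson bexE)
    have "0 \<le> (real m + 1) * N x" using vnorm_nonneg[OF x(1)] by simp
    hence pos: "l1_norm x > 0" using x(2) by linarith
    define y where "y = complex_of_real (1 / l1_norm x) \<cdot>\<^sub>v x"
    have "l1_norm y = (\<Sum>k<d. cmod (x $ k) / l1_norm x)"
      unfolding y_def l1_norm_def[of "_ \<cdot>\<^sub>v x"] using x(1) pos by (simp add: norm_divide)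
    also have "\<dots> = 1" using x(1) pos by (simp add: l1_norm_def flip: sum_divide_distrib)
    finally have "l1_norm y = 1" .
    moreover have "N y = N x / l1_norm x"
      unfolding y_def using vnorm_smult[OF x(1)] pos by (simp add: norm_divide)
    moreover have "N x / l1_norm x < 1 / (real m + 1)" using x(2) pos by (simp add: field_simps)
    moreover have "y \<in> carrier_vec d" unfolding y_def using x(1) by simp
    ultimately show ?thesis by auto
  qed
  then obtain y where y: "\<And>m. y m \<in> carrier_vec d" "\<And>m. l1_norm (y m) = 1"
    "\<And>m. N (y m) < 1 / (real m + 1)"
    by metis
  have "(\<lambda>m. N (y m)) \<longlonglongrightarrow> 0"
  proof (rule real_tendsto_sandwich[where f = "\<lambda>_. 0" and h = "\<lambda>m. 1 / (real m + 1)"])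
    show "(\<lambda>m. 1 / (real m + 1)) \<longlonglongrightarrow> 0"
      using LIMSEQ_inverse_real_of_nat by (simp add: inverse_eq_divide add.commute)
  qed (auto intro!: always_eventually vnorm_nonneg y(1) less_imp_le[OF y(3)])
  thus False using l1_unit_vnorm_not_tendsto_0[of y, OF y(1,2)] by blast
qed

end

section \<open>Operator norms and diagonalisable matrices\<close>

lemma op_norm_bdd_above:
  assumes N: "is_vnorm d N" and A: "(A :: complex mat) \<in> carrier_mat d d"
  shows "bdd_above ((\<lambda>x. N (A *\<^sub>v x)) ` {x\<in>carrier_vec d. N x \<le> 1})"
proof -
  obtain K where K: "K \<ge> 0" "\<forall>x\<in>carrier_vec d. N x \<le> K * l1_norm x"
    using vnorm_le_l1_norm[OF N] by blast
  obtain c where c: "c > 0" "\<forall>x\<in>carrier_vec d. l1_norm x \<le> c * N x"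
    using l1_norm_le_vnorm[OF N] by blast
  define S where "S = (\<Sum>k<d. \<Sum>l<d. cmod (A $$ (k, l)))"
  have "S \<ge> 0" unfolding S_def by (intro sum_nonneg) auto
  have "N (A *\<^sub>v x) \<le> K * (S * c)" if x: "x \<in> carrier_vec d" "N x \<le> 1" for x
  proof -
    have "N (A *\<^sub>v x) \<le> K * l1_norm (A *\<^sub>v x)" using K A x by simp
    also have "\<dots> \<le> K * (S * l1_norm x)"
      using l1_norm_mult_mat_vec_le[OF A x(1)] K(1) unfolding S_def by (rule mult_left_mono)
    also have "\<dots> \<le> K * (S * (c * N x))"
      using c x K(1) \<open>S \<ge> 0\<close> by (intro mult_left_mono) auto
    also have "\<dots> \<le> K * (S * c)"
      using c x K(1) \<open>S \<ge> 0\<close> by (intro mult_left_mono) auto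
    finally show ?thesis .
  qed
  thus ?thesis by (intro bdd_aboveI2) blast
qed

lemma le_op_norm:
  assumes "is_vnorm d N" "(A :: complex mat) \<in> carrier_mat d d"
    and "x \<in> carrier_vec d" "N x \<le> 1"
  shows "N (A *\<^sub>v x) \<le> op_norm d N A"
  unfolding op_norm_def using op_norm_bdd_above[OF assms(1,2)] assms(3,4) by (intro cSUP_upper) auto

lemma eigenvalue_norm_le_op_norm:
  assumes N: "is_vnorm d N" and A: "(A :: complex mat) \<in> carrier_mat d d"
    and v: "v \<in> carrier_vec d" "v \<noteq> 0\<^sub>v d" and eigen: "A *\<^sub>v v = \<mu> \<cdot>\<^sub>v v"
  shows "cmod \<mu> \<le> op_norm d N A"
proof -
  have pos: "N v > 0" using vnorm_nonneg[OF N v(1)] vnorm_eq_0_iff[OF N v(1)] v(2) by auto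
  define w where "w = complex_of_real (1 / N v) \<cdot>\<^sub>v v"
  have w: "w \<in> carrier_vec d" unfolding w_def using v by simp
  have "N w = 1" unfolding w_def using vnorm_smult[OF N v(1)] pos by (simp add: norm_divide)
  moreover have "A *\<^sub>v w = \<mu> \<cdot>\<^sub>v w"
    unfolding w_def using mult_mat_vec[OF A v(1)] eigen by (auto simp: smult_smult_assoc mult.commute)
  ultimately have "N (A *\<^sub>v w) = cmod \<mu>" using vnorm_smult[OF N w] by simp
  thus ?thesis using le_op_norm[OF N A w] \<open>N w = 1\<close> by simp
qed

lemma mat_inv_carrier_mat: "A \<in> carrier_mat n n \<Longrightarrow> invertible_mat A \<Longrightarrow> mat_inv A \<in> carrier_mat n n"
  and mat_mult_mat_inv: "A \<in> carrier_mat n n \<Longrightarrow> invertible_mat A \<Longrightarrow> A * mat_inv A = 1\<^sub>m n"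
  and mat_inv_mult_mat: "A \<in> carrier_mat n n \<Longrightarrow> invertible_mat A \<Longrightarrow> mat_inv A * A = 1\<^sub>m n"
proof -
  assume A: "A \<in> carrier_mat n n" and "invertible_mat A"
  then obtain B where AB: "A * B = 1\<^sub>m n" and BA: "B * A = 1\<^sub>m (dim_row B)"
    unfolding invertible_mat_def inverts_mat_def by auto
  have "B \<in> carrier_mat n n"
    using arg_cong[OF AB, of dim_col] arg_cong[OF BA, of dim_col] A by auto
  hence "mat_inv A \<in> carrier_mat n n \<and> A * mat_inv A = 1\<^sub>m n \<and> mat_inv A * A = 1\<^sub>m n"
    using someI[of "\<lambda>B. B \<in> carrier_mat (dim_row A) (dim_row A) \<and> A * B = 1\<^sub>m (dim_row A) \<and>
      B * A = 1\<^sub>m (dim_row A)" B] AB BA A unfolding mat_inv_def by auto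
  thus "mat_inv A \<in> carrier_mat n n" "A * mat_inv A = 1\<^sub>m n" "mat_inv A * A = 1\<^sub>m n" by auto
qed

lemma mult_mat_diag_mat_vec:
  assumes z: "z \<in> carrier_vec m"
  shows "mat_diag m f *\<^sub>v z = vec m (\<lambda>l. f l * z $ l)"
proof (rule eq_vecI)
  fix l assume "l < dim_vec (vec m (\<lambda>l. f l * z $ l))"
  hence l: "l < m" by simp
  have "(mat_diag m f *\<^sub>v z) $ l = (\<Sum>k<m. if l = k then f k * z $ k else 0)"
    unfolding mult_mat_vec_index_sum[OF mat_diag_dim z l]
    using l by (intro sum.cong refl) (auto simp: mat_diag_def)
  thus "(mat_diag m f *\<^sub>v z) $ l = vec m (\<lambda>l. f l * z $ l) $ l" using l by (simp add: sum.delta)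
qed (simp add: mat_diag_def)

text \<open>Entrywise, \<open>X = \<Lambda>\<^sup>-\<^sup>1 X \<Gamma> + M\<close> is the scalar equation
  \<open>x\<^sub>l\<^sub>m (1 - \<nu>\<^sub>m/\<mu>\<^sub>l) = M\<^sub>l\<^sub>m\<close>, solvable when the diagonals are disjoint.\<close>

lemma diag_sylvester_solution:
  fixes M :: "complex mat"
  assumes M: "M \<in> carrier_mat p q"
    and nonzero: "\<forall>l<p. \<mu> l \<noteq> 0" and disjoint: "\<forall>l<p. \<forall>m<q. \<mu> l \<noteq> \<nu> m"
  defines "X \<equiv> mat p q (\<lambda>(l, m). M $$ (l, m) / (1 - \<nu> m / \<mu> l))"
  shows "X = mat_diag p (\<lambda>l. 1 / \<mu> l) * X * mat_diag q \<nu> + M"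
proof (rule eq_matI)
  fix l m assume "l < dim_row (mat_diag p (\<lambda>l. 1 / \<mu> l) * X * mat_diag q \<nu> + M)"
    and "m < dim_col (mat_diag p (\<lambda>l. 1 / \<mu> l) * X * mat_diag q \<nu> + M)"
  hence lm: "l < p" "m < q" using M by auto
  have "1 - \<nu> m / \<mu> l \<noteq> 0" using nonzero disjoint lm by (auto simp: field_simps)
  moreover have "X $$ (l, m) = M $$ (l, m) / (1 - \<nu> m / \<mu> l)" using lm unfolding X_def by simp
  ultimately have "X $$ (l, m) = 1 / \<mu> l * X $$ (l, m) * \<nu> m + M $$ (l, m)"
    using nonzero lm by (auto simp: field_simps)
  moreover have "X \<in> carrier_mat p q" unfolding X_def by simp
  ultimately show "X $$ (l, m) = (mat_diag p (\<lambda>l. 1 / \<mu> l) * X * mat_diag q \<nu> + M) $$ (l, m)"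
    using lm M by (simp add: mat_diag_mult_left[of _ p q] mat_diag_mult_right[of _ p q])
qed (use M in \<open>auto simp: X_def\<close>)

lemma mat_inv_mult_eigenbasis:
  fixes A V :: "complex mat"
  assumes A: "A \<in> carrier_mat p p" "invertible_mat A" and V: "V \<in> carrier_mat p p"
    and diag_A: "A * V = V * mat_diag p \<mu>" and nonzero: "\<forall>l<p. \<mu> l \<noteq> 0"
  shows "mat_inv A * V = V * mat_diag p (\<lambda>l. 1 / \<mu> l)"
proof -
  define Ai \<Lambda> \<Lambda>' where "Ai = mat_inv A" and "\<Lambda> = mat_diag p \<mu>"
    and "\<Lambda>' = mat_diag p (\<lambda>l. 1 / \<mu> l)"
  have Ai: "Ai \<in> carrier_mat p p" "Ai * A = 1\<^sub>m p"
    unfolding Ai_def using mat_inv_carrier_mat mat_inv_mult_mat A by auto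
  have diags: "\<Lambda> \<in> carrier_mat p p" "\<Lambda>' \<in> carrier_mat p p" unfolding \<Lambda>_def \<Lambda>'_def by auto
  have "\<Lambda> * \<Lambda>' = 1\<^sub>m p"
    unfolding \<Lambda>_def \<Lambda>'_def mat_diag_diag using nonzero by (intro eq_matI) (auto simp: mat_diag_def)
  hence "Ai * V = Ai * (V * \<Lambda>) * \<Lambda>'"
    using Ai(1) V diags by (simp add: assoc_mult_mat[of _ p p _ p _ p])
  also have "\<dots> = (Ai * A) * V * \<Lambda>'"
    using Ai(1) A(1) V diags by (simp add: diag_A[folded \<Lambda>_def, symmetric] assoc_mult_mat[of _ p p _ p _ p])
  finally show ?thesis using Ai(2) V unfolding Ai_def \<Lambda>'_def by simp
qed

lemma mat_inv_eigenbasis_mult: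
  fixes B W :: "complex mat"
  assumes B: "B \<in> carrier_mat q q" and W: "W \<in> carrier_mat q q" "invertible_mat W"
    and diag_B: "B * W = W * mat_diag q \<nu>"
  shows "mat_inv W * B = mat_diag q \<nu> * mat_inv W"
proof -
  define Wi where "Wi = mat_inv W"
  have Wi: "Wi \<in> carrier_mat q q" "W * Wi = 1\<^sub>m q" "Wi * W = 1\<^sub>m q"
    unfolding Wi_def using mat_inv_carrier_mat mat_mult_mat_inv mat_inv_mult_mat W by auto
  have "Wi * B = Wi * (B * W) * Wi"
    using B Wi W(1) by (simp add: assoc_mult_mat[of _ q q _ q _ q])
  also have "\<dots> = (Wi * W) * mat_diag q \<nu> * Wi"
    using Wi(1) W(1) by (simp add: diag_B assoc_mult_mat[of _ q q _ q _ q])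
  also have "\<dots> = mat_diag q \<nu> * Wi" unfolding Wi(3) by (simp add: left_mult_one_mat[OF mat_diag_dim])
  finally show ?thesis unfolding Wi_def .
qed

lemma sylvester_by_diagonalization:
  fixes A B V W M :: "complex mat"
  assumes A: "A \<in> carrier_mat p p" "invertible_mat A"
    and V: "V \<in> carrier_mat p p" "invertible_mat V"
    and B: "B \<in> carrier_mat q q"
    and W: "W \<in> carrier_mat q q" "invertible_mat W"
    and diag_A: "A * V = V * mat_diag p \<mu>" and diag_B: "B * W = W * mat_diag q \<nu>"
    and M: "M \<in> carrier_mat p q"
    and nonzero: "\<forall>l<p. \<mu> l \<noteq> 0" and disjoint: "\<forall>l<p. \<forall>m<q. \<mu> l \<noteq> \<nu> m"
  defines "X \<equiv> mat p q (\<lambda>(l, m). M $$ (l, m) / (1 - \<nu> m / \<mu> l))"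
  shows "A * (mat_inv A * V * X * mat_inv W) = mat_inv A * V * X * mat_inv W * B + V * M * mat_inv W"
proof -
  define Ai Wi \<Lambda>' \<Gamma> where "Ai = mat_inv A" and "Wi = mat_inv W"
    and "\<Lambda>' = mat_diag p (\<lambda>l. 1 / \<mu> l)" and "\<Gamma> = mat_diag q \<nu>"
  have Ai: "Ai \<in> carrier_mat p p" "A * Ai = 1\<^sub>m p"
    unfolding Ai_def using mat_inv_carrier_mat mat_mult_mat_inv A by auto
  have Wi: "Wi \<in> carrier_mat q q" unfolding Wi_def using mat_inv_carrier_mat W by auto
  have diags: "\<Lambda>' \<in> carrier_mat p p" "\<Gamma> \<in> carrier_mat q q" unfolding \<Lambda>'_def \<Gamma>_def by auto
  have X: "X \<in> carrier_mat p q" unfolding X_def by simp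
  have Ai_V: "Ai * V = V * \<Lambda>'"
    unfolding Ai_def \<Lambda>'_def by (rule mat_inv_mult_eigenbasis[OF A V(1) diag_A nonzero])
  have Wi_B: "Wi * B = \<Gamma> * Wi"
    unfolding Wi_def \<Gamma>_def by (rule mat_inv_eigenbasis_mult[OF B W diag_B])
  have "A * (Ai * V * X * Wi) = (A * Ai) * V * X * Wi"
    using A(1) Ai(1) V(1) X Wi
    by (simp add: assoc_mult_mat[of _ p p _ p _ q] assoc_mult_mat[of _ p p _ q _ q]
        assoc_mult_mat[of _ p q _ q _ q])
  also have "\<dots> = V * (\<Lambda>' * X * \<Gamma> + M) * Wi"
    using diag_sylvester_solution[OF M nonzero disjoint] Ai(2) V(1)
    unfolding X_def[symmetric] \<Lambda>'_def[symmetric] \<Gamma>_def[symmetric] by simp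
  also have "\<dots> = V * (\<Lambda>' * X * \<Gamma>) * Wi + V * M * Wi"
    using V(1) X M Wi diags
    by (simp add: mult_add_distrib_mat[of _ p p _ q] add_mult_distrib_mat[of _ p q _ _ q])
  also have "V * (\<Lambda>' * X * \<Gamma>) * Wi = (Ai * V) * X * (Wi * B)"
    using V(1) X Wi diags unfolding Ai_V Wi_B
    by (simp add: assoc_mult_mat[of _ p p _ p _ q] assoc_mult_mat[of _ p p _ q _ q]
        assoc_mult_mat[of _ p q _ q _ q])
  also have "\<dots> = Ai * V * X * Wi * B"
    using Ai(1) V(1) X Wi B by (simp add: assoc_mult_mat[of _ p q _ q _ q])
  finally show ?thesis unfolding Ai_def Wi_def .
qed

lemma mat_inv_conj_cancel:
  fixes P Q Y Z :: "complex mat"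
  assumes P: "P \<in> carrier_mat p p" "invertible_mat P" and Q: "Q \<in> carrier_mat q q" "invertible_mat Q"
    and Y: "Y \<in> carrier_mat p r" and Z: "Z \<in> carrier_mat r q"
  shows "P * (mat_inv P * Y * Z * Q) * mat_inv Q = Y * Z"
proof -
  have Pi: "mat_inv P \<in> carrier_mat p p" and Qi: "mat_inv Q \<in> carrier_mat q q"
    using mat_inv_carrier_mat P Q by auto
  have YZ: "Y * Z \<in> carrier_mat p q" using Y Z by simp
  have "P * (mat_inv P * Y * Z * Q) * mat_inv Q = (P * mat_inv P) * (Y * Z) * (Q * mat_inv Q)"
    using P(1) Pi Y Z Q(1) Qi
    by (simp add: assoc_mult_mat[of _ p p _ p _ q] assoc_mult_mat[of _ p p _ q _ q]
        assoc_mult_mat[of _ p r _ q _ q] assoc_mult_mat[of _ p p _ r _ q]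
        assoc_mult_mat[of _ p q _ q _ q])
  also have "\<dots> = Y * Z"
    using mat_mult_mat_inv P Q YZ left_mult_one_mat[OF YZ] right_mult_one_mat[OF YZ] by simp
  finally show ?thesis .
qed

lemma invertible_mat_col_nonzero:
  fixes V :: "complex mat"
  assumes V: "V \<in> carrier_mat n n" "invertible_mat V" and m: "m < n"
  shows "col V m \<noteq> 0\<^sub>v n"
proof
  assume "col V m = 0\<^sub>v n"
  hence "mat_inv V *\<^sub>v col V m = 0\<^sub>v n" using mat_inv_carrier_mat[OF V] by (intro eq_vecI) auto
  hence "col (mat_inv V * V) m = 0\<^sub>v n" using col_mult2[OF mat_inv_carrier_mat[OF V] V(1) m] by simp
  hence "unit_vec n m = (0\<^sub>v n :: complex vec)" using mat_inv_mult_mat[OF V] m by simp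
  thus False using m by (metis index_unit_vec(1) index_zero_vec(1) zero_neq_one)
qed

lemma diagonalization_col_eigenvector:
  fixes A V :: "complex mat"
  assumes "A \<in> carrier_mat n n" "V \<in> carrier_mat n n" "A * V = V * mat_diag n \<mu>" "m < n"
  shows "A *\<^sub>v col V m = \<mu> m \<cdot>\<^sub>v col V m"
proof -
  have "A *\<^sub>v col V m = col (A * V) m" using col_mult2[OF assms(1,2,4)] by simp
  also have "\<dots> = col (V * mat_diag n \<mu>) m" using assms(3) by simp
  also have "\<dots> = \<mu> m \<cdot>\<^sub>v col V m"
    unfolding mat_diag_mult_right[OF assms(2)] using assms by (intro eq_vecI) (auto simp: mult.commute)
  finally show ?thesis .
qed

lemma invertible_mat_eigenvalue_nonzero:
  fixes A :: "complex mat"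
  assumes A: "A \<in> carrier_mat n n" "invertible_mat A"
    and v: "v \<in> carrier_vec n" "v \<noteq> 0\<^sub>v n" and eigen: "A *\<^sub>v v = \<mu> \<cdot>\<^sub>v v"
  shows "\<mu> \<noteq> 0"
proof
  assume "\<mu> = 0"
  hence "mat_inv A *\<^sub>v (A *\<^sub>v v) = 0\<^sub>v n"
    using eigen v(1) mat_inv_carrier_mat[OF A] by (intro eq_vecI) auto
  moreover have "mat_inv A *\<^sub>v (A *\<^sub>v v) = v"
    using assoc_mult_mat_vec[OF mat_inv_carrier_mat[OF A] A(1) v(1)] mat_inv_mult_mat[OF A] v(1)
    by simp
  ultimately show False using v(2) by simp
qed

section \<open>The linear cascade and its Sylvester equations\<close>

locale cascade =
  fixes n :: nat and d :: "nat \<Rightarrow> nat" and L V C :: "nat \<Rightarrow> complex mat"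
    and lam :: "nat \<Rightarrow> nat \<Rightarrow> complex"
  assumes L_dim: "\<forall>i\<in>{1..n}. L i \<in> carrier_mat (d i) (d i)"
    and C_dim: "\<forall>i\<in>{2..n}. C i \<in> carrier_mat (d i) (d (i - 1))"
    and V_dim: "\<forall>i\<in>{1..n}. V i \<in> carrier_mat (d i) (d i)"
    and L_inv: "\<forall>i\<in>{1..n}. invertible_mat (L i)"
    and V_inv: "\<forall>i\<in>{1..n}. invertible_mat (V i)"
    and diagonalize: "\<forall>i\<in>{1..n}. L i * V i = V i * mat_diag (d i) (lam i)"
    and spec_disj: "\<forall>i\<in>{1..n}. \<forall>j\<in>{1..n}. i \<noteq> j \<longrightarrow> spectrum (L i) \<inter> spectrum (L j) = {}"
begin

abbreviation "D \<equiv> Dmat d L C V lam"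

lemma L_carrier: "i \<in> {1..n} \<Longrightarrow> L i \<in> carrier_mat (d i) (d i)"
  and V_carrier: "i \<in> {1..n} \<Longrightarrow> V i \<in> carrier_mat (d i) (d i)"
  and C_carrier: "i \<in> {2..n} \<Longrightarrow> C i \<in> carrier_mat (d i) (d (i - 1))"
  and mat_inv_V_carrier: "i \<in> {1..n} \<Longrightarrow> mat_inv (V i) \<in> carrier_mat (d i) (d i)"
  using L_dim V_dim C_dim V_inv mat_inv_carrier_mat[of "V i" "d i"] by simp_all

lemma eigenvector_col_V:
  assumes "i \<in> {1..n}" "m < d i"
  shows "col (V i) m \<in> carrier_vec (d i)" "col (V i) m \<noteq> 0\<^sub>v (d i)"
    "L i *\<^sub>v col (V i) m = lam i m \<cdot>\<^sub>v col (V i) m"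
proof -
  show "col (V i) m \<in> carrier_vec (d i)" using V_carrier[OF assms(1)] assms(2) by simp
  show "col (V i) m \<noteq> 0\<^sub>v (d i)"
    using invertible_mat_col_nonzero[OF V_carrier[OF assms(1)] _ assms(2)] V_inv assms(1) by simp
  show "L i *\<^sub>v col (V i) m = lam i m \<cdot>\<^sub>v col (V i) m"
    using diagonalization_col_eigenvector[OF L_carrier[OF assms(1)] V_carrier[OF assms(1)] _ assms(2)]
      diagonalize assms(1) by simp
qed

lemma lam_nonzero:
  assumes "i \<in> {1..n}" "m < d i"
  shows "lam i m \<noteq> 0"
  using invertible_mat_eigenvalue_nonzero[OF L_carrier[OF assms(1)] _ eigenvector_col_V[OF assms]]
    L_inv assms(1) by simp

lemma lam_in_spectrum:
  assumes "i \<in> {1..n}" "m < d i"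
  shows "lam i m \<in> spectrum (L i)"
proof -
  have "eigenvector (L i) (col (V i) m) (lam i m)"
    unfolding eigenvector_def using eigenvector_col_V[OF assms] L_carrier[OF assms(1)] by simp
  thus ?thesis unfolding spectrum_def eigenvalue_def by blast
qed

lemma lam_distinct:
  assumes "i \<in> {1..n}" "j \<in> {1..n}" "i \<noteq> j" "l < d i" "m < d j"
  shows "lam i l \<noteq> lam j m"
proof -
  have "spectrum (L i) \<inter> spectrum (L j) = {}" using spec_disj assms(1-3) by simp
  thus ?thesis using lam_in_spectrum[OF assms(1,4)] lam_in_spectrum[OF assms(2,5)] by auto
qed

lemma Dmat_same: "D i i = 1\<^sub>m (d i)"
  by (cases i) auto

lemma Dmat_carrier:
  assumes "1 \<le> j" "j \<le> i" "i \<le> n"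
  shows "D i j \<in> carrier_mat (d i) (d j)"
proof (cases "j = i")
  case False
  then obtain k where k: "i = Suc k" using assms by (cases i) auto
  have i: "i \<in> {1..n}" and j: "j \<in> {1..n}" using assms by auto
  have "mat_inv (L i) * V i * mat (d i) (d j) f * mat_inv (V j) \<in> carrier_mat (d i) (d j)" for f
    using mat_inv_carrier_mat[OF L_carrier[OF i]] L_inv V_carrier[OF i] mat_inv_V_carrier[OF j] i
    by (intro mult_carrier_mat[of _ _ "d j"] mult_carrier_mat[of _ _ "d i"]) auto
  thus ?thesis using False k by (simp add: Let_def)
qed (simp add: Dmat_same)

lemma Dmat_sylvester:
  assumes i: "i \<in> {2..n}" and j: "1 \<le> j" "j < i"
  shows "L i * D i j = D i j * L j + C i * D (i - 1) j"
proof -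
  have ij: "i \<in> {1..n}" "j \<in> {1..n}" using i j by auto
  have D': "D (i - 1) j \<in> carrier_mat (d (i - 1)) (d j)" using Dmat_carrier i j by auto
  define M where "M = mat_inv (V i) * C i * D (i - 1) j * V j"
  have M: "M \<in> carrier_mat (d i) (d j)"
    unfolding M_def using mat_inv_V_carrier[OF ij(1)] C_carrier[OF i] V_carrier[OF ij(2)] D'
    by (auto intro!: mult_carrier_mat)
  have "V i * M * mat_inv (V j) = C i * D (i - 1) j"
    unfolding M_def using mat_inv_conj_cancel[OF V_carrier[OF ij(1)] _ V_carrier[OF ij(2)] _
        C_carrier[OF i] D'] V_inv ij by simp
  moreover obtain k where k: "i = Suc k" using i by (cases i) auto
  hence "D i j = mat_inv (L i) * V i * mat (d i) (d j) (\<lambda>(l, m). M $$ (l, m) / (1 - lam j m / lam i l))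
      * mat_inv (V j)"
    unfolding M_def using j by (simp add: Let_def)
  ultimately show ?thesis
    using sylvester_by_diagonalization[OF L_carrier[OF ij(1)] _ V_carrier[OF ij(1)] _
        L_carrier[OF ij(2)] V_carrier[OF ij(2)] _ _ _ M]
      L_inv V_inv diagonalize ij lam_nonzero lam_distinct j(2) by auto
qed

end

declare Dmat.simps[simp del]

section \<open>The perturbation \<open>pert\<close> and its inverse\<close>

lemma foldr_add_vec:
  fixes g :: "nat \<Rightarrow> complex vec"
  assumes "\<forall>j\<in>set js. g j \<in> carrier_vec m" "v \<in> carrier_vec m"
  shows "foldr (\<lambda>j acc. acc + g j) js v \<in> carrier_vec m \<and>
    (\<forall>k<m. foldr (\<lambda>j acc. acc + g j) js v $ k = v $ k + (\<Sum>j\<leftarrow>js. g j $ k))"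
  using assms by (induction js) auto

lemma mult_mat_vec_index_lincomb:
  fixes A :: "complex mat"
  assumes A: "A \<in> carrier_mat m q" and w: "w \<in> carrier_vec q" and k: "k < m"
    and ws: "\<forall>j\<in>J. w' j \<in> carrier_vec q" and "finite J"
    and w_eq: "\<forall>l<q. w $ l = (\<Sum>j\<in>J. c j * w' j $ l)"
  shows "(A *\<^sub>v w) $ k = (\<Sum>j\<in>J. c j * (A *\<^sub>v w' j) $ k)"
proof -
  have "(A *\<^sub>v w) $ k = (\<Sum>l<q. \<Sum>j\<in>J. c j * (A $$ (k, l) * w' j $ l))"
    using mult_mat_vec_index_sum[OF A w k] w_eq by (simp add: sum_distrib_left mult.left_commute)
  also have "\<dots> = (\<Sum>j\<in>J. c j * (\<Sum>l<q. A $$ (k, l) * w' j $ l))"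
    by (subst sum.swap) (simp add: sum_distrib_left)
  also have "\<dots> = (\<Sum>j\<in>J. c j * (A *\<^sub>v w' j) $ k)"
    using mult_mat_vec_index_sum[OF A _ k] ws by simp
  finally show ?thesis .
qed

lemma minus_one_power_diff:
  assumes "j < i"
  shows "(-1 :: complex) ^ (i - j) = - ((-1) ^ (i - 1 - j))"
proof -
  have "i - j = Suc (i - 1 - j)" using assms by simp
  thus ?thesis by simp
qed

lemma funpow_closed: "(\<And>y. y \<in> S \<Longrightarrow> f y \<in> S) \<Longrightarrow> x \<in> S \<Longrightarrow> (f ^^ t) x \<in> S"
  by (induction t) auto

lemma state_space_block: "x \<in> state_space n d \<Longrightarrow> i \<in> {1..n} \<Longrightarrow> x i \<in> carrier_vec (d i)"
  unfolding state_space_def by auto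

context cascade begin

abbreviation "pv x \<equiv> pert_vals d L C V lam x"

lemma pert_vals_stable: "1 \<le> j \<Longrightarrow> j \<le> k \<Longrightarrow> pv x k j = pv x j j"
  by (induction k) (auto simp: le_Suc_eq)

lemma pert_vals_diag:
  assumes x: "x \<in> state_space n d" and i: "i \<in> {1..n}"
  shows "pv x i i \<in> carrier_vec (d i) \<and>
    (\<forall>k<d i. pv x i i $ k = x i $ k + (\<Sum>j\<in>{1..<i}. (-1) ^ (i - 1 - j) * (D i j *\<^sub>v pv x j j) $ k))"
  using i
proof (induction i rule: less_induct)
  case (less i)
  then obtain k where k: "i = Suc k" by (cases i) auto
  define g where "g j = (-1) ^ (k - j) \<cdot>\<^sub>v (D i j *\<^sub>v pv x j j)" for j
  have g: "\<forall>j\<in>set [1..<i]. g j \<in> carrier_vec (d i)"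
  proof
    fix j assume "j \<in> set [1..<i]"
    hence j: "1 \<le> j" "j < i" by auto
    have "pv x j j \<in> carrier_vec (d j)" using less.IH[of j] j less.prems by simp
    moreover have "D i j \<in> carrier_mat (d i) (d j)" using Dmat_carrier j less.prems by auto
    ultimately show "g j \<in> carrier_vec (d i)" unfolding g_def by simp
  qed
  have "pv x i i = foldr (\<lambda>j acc. acc + g j) [1..<i] (x i)"
    unfolding k g_def pert_vals.simps(2) fun_upd_same
    using pert_vals_stable[of _ k] by (intro foldr_cong) auto
  moreover have "(\<Sum>j\<leftarrow>[1..<i]. g j $ l) =
      (\<Sum>j\<in>{1..<i}. (-1) ^ (i - 1 - j) * (D i j *\<^sub>v pv x j j) $ l)" if "l < d i" for l
  proof -
    have "(\<Sum>j\<leftarrow>[1..<i]. g j $ l) = (\<Sum>j\<in>{1..<i}. g j $ l)"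
      by (simp only: sum_list_distinct_conv_sum_set distinct_upt set_upt)
    also have "\<dots> = (\<Sum>j\<in>{1..<i}. (-1) ^ (i - 1 - j) * (D i j *\<^sub>v pv x j j) $ l)"
    proof (intro sum.cong refl)
      fix j assume "j \<in> {1..<i}"
      hence "D i j \<in> carrier_mat (d i) (d j)" using Dmat_carrier less.prems by simp
      thus "g j $ l = (-1) ^ (i - 1 - j) * (D i j *\<^sub>v pv x j j) $ l"
        unfolding g_def using that k by simp
    qed
    finally show ?thesis .
  qed
  ultimately show ?case
    using foldr_add_vec[OF g state_space_block[OF x less.prems]] by simp
qed

text \<open>This is the recursion by which the paper defines \<open>pert\<^sub>i\<close>.\<close>

lemma pert_map_block:
  assumes x: "x \<in> state_space n d" and i: "i \<in> {1..n}"
  shows "pert_map n d L C V lam x i \<in> carrier_vec (d i) \<and>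
    (\<forall>k<d i. pert_map n d L C V lam x i $ k = x i $ k +
       (\<Sum>j\<in>{1..<i}. (-1) ^ (i - 1 - j) * (D i j *\<^sub>v pert_map n d L C V lam x j) $ k))"
proof -
  have pert: "pert_map n d L C V lam x j = pv x j j" if "j \<in> {1..i}" for j
    using that i unfolding pert_map_def by auto
  hence "(\<Sum>j\<in>{1..<i}. (-1) ^ (i - 1 - j) * (D i j *\<^sub>v pert_map n d L C V lam x j) $ k)
      = (\<Sum>j\<in>{1..<i}. (-1) ^ (i - 1 - j) * (D i j *\<^sub>v pv x j j) $ k)" for k
    by (intro sum.cong refl) auto
  thus ?thesis using pert_vals_diag[OF x i] pert i by simp
qed

lemma Lin_map_state_space:
  assumes x: "x \<in> state_space n d"
  shows "Lin_map n L C x \<in> state_space n d"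
proof -
  have "Lin_map n L C x i \<in> carrier_vec (d i)" if i: "i \<in> {1..n}" for i
  proof (cases "i = 1")
    case False
    hence i2: "i \<in> {2..n}" "i - 1 \<in> {1..n}" using i by auto
    have "C i *\<^sub>v x (i - 1) \<in> carrier_vec (d i)"
      using C_carrier[OF i2(1)] state_space_block[OF x i2(2)] by simp
    thus ?thesis using L_carrier[OF i] state_space_block[OF x i] i2 False by (simp add: Lin_map_def)
  qed (use L_carrier[OF i] state_space_block[OF x i] in \<open>simp add: Lin_map_def\<close>)
  thus ?thesis using x unfolding state_space_def Lin_map_def by auto
qed

lemma Nom_map_state_space:
  assumes x: "x \<in> state_space n d"
  shows "Nom_map n L x \<in> state_space n d"
proof -
  have "Nom_map n L x i \<in> carrier_vec (d i)" if "i \<in> {1..n}" for i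
    using L_carrier[OF that] state_space_block[OF x that] that by (simp add: Nom_map_def)
  thus ?thesis using x unfolding state_space_def Nom_map_def by simp
qed

lemma pert_map_state_space:
  assumes x: "x \<in> state_space n d"
  shows "pert_map n d L C V lam x \<in> state_space n d"
proof -
  have "pert_map n d L C V lam x i \<in> carrier_vec (d i)" if "i \<in> {1..n}" for i
    using pert_map_block[OF x that] by simp
  thus ?thesis using x unfolding state_space_def pert_map_def by simp
qed

text \<open>Coordinates of the inverse of \<open>pert\<close>: by \<open>unpert_pert\<close> and \<open>Lin_map_unpert\<close> below,
  \<open>Lin = pert\<^sup>-\<^sup>1 \<circ> Nom \<circ> pert\<close>.\<close>

definition unpert :: "(nat \<Rightarrow> complex vec) \<Rightarrow> nat \<Rightarrow> nat \<Rightarrow> complex" where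
  "unpert u i k = (\<Sum>j = 1..i. (-1) ^ (i - j) * (D i j *\<^sub>v u j) $ k)"

lemma unpert_split:
  assumes "i \<in> {1..n}" "u i \<in> carrier_vec (d i)" "k < d i"
  shows "unpert u i k = u i $ k - (\<Sum>j\<in>{1..<i}. (-1) ^ (i - 1 - j) * (D i j *\<^sub>v u j) $ k)"
proof -
  have "{1..i} = insert i {1..<i}" using assms(1) by auto
  hence "unpert u i k = (D i i *\<^sub>v u i) $ k + (\<Sum>j\<in>{1..<i}. (-1) ^ (i - j) * (D i j *\<^sub>v u j) $ k)"
    unfolding unpert_def by simp
  also have "\<dots> = u i $ k - (\<Sum>j\<in>{1..<i}. (-1) ^ (i - 1 - j) * (D i j *\<^sub>v u j) $ k)"
    using assms(2,3) minus_one_power_diff by (simp add: Dmat_same sum_negf[symmetric])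
  finally show ?thesis .
qed

lemma unpert_pert:
  assumes "x \<in> state_space n d" "i \<in> {1..n}" "k < d i"
  shows "unpert (pert_map n d L C V lam x) i k = x i $ k"
  using unpert_split[OF assms(2) _ assms(3)] pert_map_block[OF assms(1,2)] assms(3) by simp

lemma Dmat_mult_L:
  assumes i: "i \<in> {1..n}" and j: "1 \<le> j" "j \<le> i" and v: "v \<in> carrier_vec (d j)"
    and k: "k < d i"
  shows "(D i j *\<^sub>v (L j *\<^sub>v v)) $ k =
    (L i *\<^sub>v (D i j *\<^sub>v v)) $ k - (if j < i then (C i *\<^sub>v (D (i - 1) j *\<^sub>v v)) $ k else 0)"
proof (cases "j < i")
  case True
  hence i2: "i \<in> {2..n}" using i j by auto
  have Dij: "D i j \<in> carrier_mat (d i) (d j)" and Dij': "D (i - 1) j \<in> carrier_mat (d (i - 1)) (d j)"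
    using Dmat_carrier i j True by auto
  have Lj: "L j \<in> carrier_mat (d j) (d j)" using L_carrier i j by auto
  have "L i *\<^sub>v (D i j *\<^sub>v v) = (D i j * L j + C i * D (i - 1) j) *\<^sub>v v"
    using assoc_mult_mat_vec[OF L_carrier[OF i] Dij v] Dmat_sylvester[OF i2 j(1) True] by simp
  also have "\<dots> = D i j *\<^sub>v (L j *\<^sub>v v) + C i *\<^sub>v (D (i - 1) j *\<^sub>v v)"
    using Dij Dij' Lj C_carrier[OF i2] v
    by (simp add: add_mult_distrib_mat_vec[of _ "d i" "d j"] assoc_mult_mat_vec[of _ "d i" "d j"]
        assoc_mult_mat_vec[of _ "d i" "d (i - 1)"])
  finally show ?thesis using True k C_carrier[OF i2] by simp
next
  case False
  hence "j = i" using j by simp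
  thus ?thesis using L_carrier[OF i] v by (simp add: Dmat_same)
qed

lemma mult_mat_vec_unpert:
  assumes a: "a \<in> state_space n d" and u: "u \<in> state_space n d"
    and a_eq: "\<forall>i\<in>{1..n}. \<forall>k<d i. a i $ k = unpert u i k"
    and i: "i \<in> {1..n}" and A: "A \<in> carrier_mat m (d i)" and k: "k < m"
  shows "(A *\<^sub>v a i) $ k = (\<Sum>j = 1..i. (-1) ^ (i - j) * (A *\<^sub>v (D i j *\<^sub>v u j)) $ k)"
proof (rule mult_mat_vec_index_lincomb[OF A state_space_block[OF a i] k])
  show "\<forall>j\<in>{1..i}. D i j *\<^sub>v u j \<in> carrier_vec (d i)"
  proof
    fix j assume "j \<in> {1..i}"
    hence "D i j \<in> carrier_mat (d i) (d j)" "u j \<in> carrier_vec (d j)"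
      using Dmat_carrier state_space_block[OF u] i by auto
    thus "D i j *\<^sub>v u j \<in> carrier_vec (d i)" by simp
  qed
  show "\<forall>l<d i. a i $ l = (\<Sum>j = 1..i. (-1) ^ (i - j) * (D i j *\<^sub>v u j) $ l)"
    using a_eq i unfolding unpert_def by blast
qed simp

lemma unpert_Nom_map:
  assumes u: "u \<in> state_space n d" and i: "i \<in> {1..n}" and k: "k < d i"
  shows "unpert (Nom_map n L u) i k = (\<Sum>j = 1..i. (-1) ^ (i - j) * (L i *\<^sub>v (D i j *\<^sub>v u j)) $ k)
    + (\<Sum>j = 1..i - 1. (-1) ^ (i - 1 - j) * (C i *\<^sub>v (D (i - 1) j *\<^sub>v u j)) $ k)"
proof -
  define c where "c j = (C i *\<^sub>v (D (i - 1) j *\<^sub>v u j)) $ k" for j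
  define f where "f j = (-1) ^ (i - j) * (if j < i then c j else 0)" for j
  have "unpert (Nom_map n L u) i k = (\<Sum>j = 1..i. (-1) ^ (i - j) * (L i *\<^sub>v (D i j *\<^sub>v u j)) $ k)
      - (\<Sum>j = 1..i. f j)"
    unfolding unpert_def f_def sum_subtractf[symmetric] right_diff_distrib[symmetric]
  proof (intro sum.cong refl)
    fix j assume j: "j \<in> {1..i}"
    hence "Nom_map n L u j = L j *\<^sub>v u j" using i by (simp add: Nom_map_def)
    thus "(-1) ^ (i - j) * (D i j *\<^sub>v Nom_map n L u j) $ k = (-1) ^ (i - j) *
        ((L i *\<^sub>v (D i j *\<^sub>v u j)) $ k - (if j < i then c j else 0))"
      using Dmat_mult_L[OF i _ _ state_space_block[OF u] k, of j] i j by (simp add: c_def)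
  qed
  moreover have "(\<Sum>j = 1..i. f j) = - (\<Sum>j = 1..i - 1. (-1) ^ (i - 1 - j) * c j)"
  proof -
    have "{1..i} = insert i {1..i - 1}" using i by auto
    hence "(\<Sum>j = 1..i. f j) = f i + (\<Sum>j = 1..i - 1. f j)" by (simp only:) (rule sum.insert; auto)
    also have "\<dots> = (\<Sum>j = 1..i - 1. (-1) ^ (i - j) * c j)"
      unfolding f_def by (simp, intro sum.cong refl) auto
    also have "\<dots> = - (\<Sum>j = 1..i - 1. (-1) ^ (i - 1 - j) * c j)"
      unfolding sum_negf[symmetric] by (intro sum.cong refl) (use minus_one_power_diff in auto)
    finally show ?thesis .
  qed
  ultimately show ?thesis by (simp add: c_def)
qed

lemma Lin_map_unpert:
  assumes a: "a \<in> state_space n d" and u: "u \<in> state_space n d"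
    and a_eq: "\<forall>i\<in>{1..n}. \<forall>k<d i. a i $ k = unpert u i k"
    and i: "i \<in> {1..n}" and k: "k < d i"
  shows "Lin_map n L C a i $ k = unpert (Nom_map n L u) i k"
proof (cases "i = 1")
  case True
  thus ?thesis
    using unpert_Nom_map[OF u i k] mult_mat_vec_unpert[OF a u a_eq i L_carrier[OF i] k] i
    by (simp add: Lin_map_def)
next
  case False
  hence i2: "i \<in> {2..n}" "i - 1 \<in> {1..n}" using i by auto
  have "Lin_map n L C a i = L i *\<^sub>v a i + C i *\<^sub>v a (i - 1)" using i2(1) by (simp add: Lin_map_def)
  thus ?thesis
    using unpert_Nom_map[OF u i k] mult_mat_vec_unpert[OF a u a_eq i L_carrier[OF i] k]
      mult_mat_vec_unpert[OF a u a_eq i2(2) C_carrier[OF i2(1)] k] C_carrier[OF i2(1)] L_carrier[OF i] k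
    by simp
qed

lemma Lin_iter_unpert:
  assumes x: "x \<in> state_space n d"
  shows "\<forall>i\<in>{1..n}. \<forall>k<d i. (Lin_map n L C ^^ t) x i $ k
    = unpert ((Nom_map n L ^^ t) (pert_map n d L C V lam x)) i k"
proof (induction t)
  case 0
  show ?case using unpert_pert[OF x] by simp
next
  case (Suc t)
  thus ?case
    using Lin_map_unpert[OF funpow_closed[OF Lin_map_state_space x]
        funpow_closed[OF Nom_map_state_space pert_map_state_space[OF x]]] by simp
qed

section \<open>Asymptotics of the linear iterates\<close>

lemma Nom_iter_block:
  assumes p: "p \<in> state_space n d" and j: "j \<in> {1..n}"
  shows "(Nom_map n L ^^ t) p j = V j *\<^sub>v vec (d j) (\<lambda>m. lam j m ^ t * (mat_inv (V j) *\<^sub>v p j) $ m)"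
proof (induction t)
  case 0
  have "vec (d j) (\<lambda>m. lam j m ^ 0 * (mat_inv (V j) *\<^sub>v p j) $ m) = mat_inv (V j) *\<^sub>v p j"
    using mat_inv_V_carrier[OF j] by (intro eq_vecI) auto
  thus ?case
    using assoc_mult_mat_vec[OF V_carrier[OF j] mat_inv_V_carrier[OF j] state_space_block[OF p j]]
      mat_mult_mat_inv[OF V_carrier[OF j]] V_inv j state_space_block[OF p j] by simp
next
  case (Suc t)
  define z where "z = vec (d j) (\<lambda>m. lam j m ^ t * (mat_inv (V j) *\<^sub>v p j) $ m)"
  have z: "z \<in> carrier_vec (d j)" unfolding z_def by simp
  have "Nom_map n L q j = L j *\<^sub>v q j" for q using j by (simp add: Nom_map_def)
  hence "(Nom_map n L ^^ Suc t) p j = L j *\<^sub>v (V j *\<^sub>v z)" using Suc unfolding z_def by simp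
  also have "\<dots> = V j *\<^sub>v (mat_diag (d j) (lam j) *\<^sub>v z)"
    using assoc_mult_mat_vec[OF L_carrier[OF j] V_carrier[OF j] z]
      assoc_mult_mat_vec[OF V_carrier[OF j] mat_diag_dim z] diagonalize j by simp
  also have "mat_diag (d j) (lam j) *\<^sub>v z = vec (d j) (\<lambda>m. lam j m ^ Suc t * (mat_inv (V j) *\<^sub>v p j) $ m)"
    unfolding mult_mat_diag_mat_vec[OF z] unfolding z_def by (intro eq_vecI) auto
  finally show ?case .
qed

lemma Nom_iter_index:
  assumes "p \<in> state_space n d" "j \<in> {1..n}" "l < d j"
  shows "(Nom_map n L ^^ t) p j $ l =
    (\<Sum>m<d j. V j $$ (l, m) * (lam j m ^ t * (mat_inv (V j) *\<^sub>v p j) $ m))"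
  unfolding Nom_iter_block[OF assms(1,2)]
  using mult_mat_vec_index_sum[OF V_carrier[OF assms(2)] _ assms(3)] by simp

lemma Nom_iter_tendsto_0:
  assumes "p \<in> state_space n d" "j \<in> {1..n}" "l < d j" and "\<forall>m<d j. cmod (lam j m) < 1"
  shows "(\<lambda>t. (Nom_map n L ^^ t) p j $ l) \<longlonglongrightarrow> 0"
proof -
  have "(\<lambda>t. \<Sum>m<d j. V j $$ (l, m) * (lam j m ^ t * (mat_inv (V j) *\<^sub>v p j) $ m))
      \<longlonglongrightarrow> (\<Sum>m<d j. V j $$ (l, m) * (0 * (mat_inv (V j) *\<^sub>v p j) $ m))"
    using assms(4) by (intro tendsto_intros LIMSEQ_power_zero) auto
  thus ?thesis unfolding Nom_iter_index[OF assms(1-3)] by simp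
qed

lemma Nom_iter_bounded:
  assumes "p \<in> state_space n d" "j \<in> {1..n}" "l < d j" and "\<forall>m<d j. cmod (lam j m) \<le> 1"
  shows "\<exists>B. \<forall>t. cmod ((Nom_map n L ^^ t) p j $ l) \<le> B"
proof -
  define w where "w = mat_inv (V j) *\<^sub>v p j"
  have "cmod ((Nom_map n L ^^ t) p j $ l) \<le> (\<Sum>m<d j. cmod (V j $$ (l, m)) * cmod (w $ m))" for t
  proof -
    have "cmod ((Nom_map n L ^^ t) p j $ l) \<le> (\<Sum>m<d j. cmod (V j $$ (l, m) * (lam j m ^ t * w $ m)))"
      unfolding Nom_iter_index[OF assms(1-3)] w_def by (rule norm_sum)
    also have "\<dots> \<le> (\<Sum>m<d j. cmod (V j $$ (l, m)) * cmod (w $ m))"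
    proof (intro sum_mono)
      fix m assume "m \<in> {..<d j}"
      hence "cmod (lam j m) ^ t \<le> 1" using assms(4) by (simp add: power_le_one)
      thus "cmod (V j $$ (l, m) * (lam j m ^ t * w $ m)) \<le> cmod (V j $$ (l, m)) * cmod (w $ m)"
        by (simp add: norm_mult norm_power mult_left_le_one_le mult_left_mono)
    qed
    finally show ?thesis .
  qed
  thus ?thesis by blast
qed

end

locale norm_ordered_cascade = cascade +
  fixes Nrm :: "nat \<Rightarrow> complex vec \<Rightarrow> real"
  assumes norms: "\<forall>i\<in>{1..n}. is_vnorm (d i) (Nrm i)"
    and norm_incr: "\<forall>i\<in>{1..<n}. op_norm (d i) (Nrm i) (L i) < op_norm (d (Suc i)) (Nrm (Suc i)) (L (Suc i))"
    and norm_le1: "op_norm (d n) (Nrm n) (L n) \<le> 1"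
begin

abbreviation "op_norm_L j \<equiv> op_norm (d j) (Nrm j) (L j)"

lemma op_norm_L_less_last:
  assumes j: "j \<in> {1..<n}"
  shows "op_norm_L j < op_norm_L n"
proof -
  have "op_norm_L k \<le> op_norm_L n" if "k \<le> n" "Suc j \<le> k" for k
    using that
  proof (induction k rule: inc_induct)
    case (step k)
    hence "op_norm_L k < op_norm_L (Suc k)" using norm_incr by auto
    thus ?case using step by simp
  qed simp
  hence "op_norm_L (Suc j) \<le> op_norm_L n" using j by simp
  moreover have "op_norm_L j < op_norm_L (Suc j)" using norm_incr j by auto
  ultimately show ?thesis by simp
qed

lemma lam_norm_le_op_norm:
  assumes "j \<in> {1..n}" "m < d j"
  shows "cmod (lam j m) \<le> op_norm_L j"
  using eigenvalue_norm_le_op_norm[OF _ L_carrier eigenvector_col_V] norms assms by blast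

lemma lam_norm_less_1: "j \<in> {1..<n} \<Longrightarrow> m < d j \<Longrightarrow> cmod (lam j m) < 1"
  using lam_norm_le_op_norm[of j m] op_norm_L_less_last[of j] norm_le1 by fastforce

lemma lam_norm_le_1: "j \<in> {1..n} \<Longrightarrow> m < d j \<Longrightarrow> cmod (lam j m) \<le> 1"
  using lam_norm_le_op_norm[of j m] lam_norm_less_1[of j m] norm_le1
  by (cases "j = n") (auto simp: less_imp_le)

text \<open>The blocks \<open>j < n\<close> of \<open>Nom\<^sup>t\<close> decay, so of the sum \<open>unpert\<close> only the term \<open>j = i\<close> survives.\<close>

lemma Lin_iter_minus_Nom_iter_tendsto_0:
  assumes x: "x \<in> state_space n d" and i: "i \<in> {1..n}" and k: "k < d i"
  shows "(\<lambda>t. (Lin_map n L C ^^ t) x i $ k - (Nom_map n L ^^ t) (pert_map n d L C V lam x) i $ k)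
    \<longlonglongrightarrow> 0"
proof -
  define u where "u t = (Nom_map n L ^^ t) (pert_map n d L C V lam x)" for t
  have u: "u t \<in> state_space n d" for t
    unfolding u_def by (rule funpow_closed[OF Nom_map_state_space pert_map_state_space[OF x]])
  have "(Lin_map n L C ^^ t) x i $ k - u t i $ k =
      - (\<Sum>j\<in>{1..<i}. (-1) ^ (i - 1 - j) * (\<Sum>l<d j. D i j $$ (k, l) * u t j $ l))" for t
  proof -
    have "(D i j *\<^sub>v u t j) $ k = (\<Sum>l<d j. D i j $$ (k, l) * u t j $ l)" if "j \<in> {1..<i}" for j
      using mult_mat_vec_index_sum[OF _ state_space_block[OF u] k] Dmat_carrier that i by auto
    thus ?thesis
      using Lin_iter_unpert[OF x] unpert_split[of i "u t" k, OF i state_space_block[OF u i] k] i k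
      unfolding u_def by simp
  qed
  moreover have "(\<lambda>t. - (\<Sum>j\<in>{1..<i}. (-1) ^ (i - 1 - j) * (\<Sum>l<d j. D i j $$ (k, l) * u t j $ l)))
      \<longlonglongrightarrow> - (\<Sum>j\<in>{1..<i}. (-1) ^ (i - 1 - j) * (\<Sum>l<d j. D i j $$ (k, l) * 0))"
    using i lam_norm_less_1 unfolding u_def
    by (intro tendsto_intros Nom_iter_tendsto_0[OF pert_map_state_space[OF x]]) auto
  ultimately show ?thesis unfolding u_def by simp
qed

lemma Lin_iter_bounded:
  assumes x: "x \<in> state_space n d" and i: "i \<in> {1..n}" and k: "k < d i"
  shows "\<exists>B. \<forall>t. cmod ((Lin_map n L C ^^ t) x i $ k) \<le> B"
proof -
  obtain B1 where B1: "\<forall>t. cmod ((Nom_map n L ^^ t) (pert_map n d L C V lam x) i $ k) \<le> B1"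
    using Nom_iter_bounded[OF pert_map_state_space[OF x] i k] lam_norm_le_1[OF i] by blast
  obtain B2 where B2: "\<forall>t. cmod ((Lin_map n L C ^^ t) x i $ k -
      (Nom_map n L ^^ t) (pert_map n d L C V lam x) i $ k) \<le> B2"
    using convergent_imp_Bseq[of "\<lambda>t. (Lin_map n L C ^^ t) x i $ k -
      (Nom_map n L ^^ t) (pert_map n d L C V lam x) i $ k"]
      Lin_iter_minus_Nom_iter_tendsto_0[OF x i k] unfolding Bseq_def convergent_def by blast
  have "cmod ((Lin_map n L C ^^ t) x i $ k) \<le> B2 + B1" for t
    using norm_triangle_sub[of "(Lin_map n L C ^^ t) x i $ k"
        "(Nom_map n L ^^ t) (pert_map n d L C V lam x) i $ k"] B1 B2
    by (smt (verit) norm_minus_commute)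
  thus ?thesis by blast
qed

end

section \<open>Continuity on the state space\<close>

context
  fixes n :: nat and d :: "nat \<Rightarrow> nat" and Nrm :: "nat \<Rightarrow> complex vec \<Rightarrow> real"
  assumes norms: "\<forall>i\<in>{1..n}. is_vnorm (d i) (Nrm i)"
begin

lemma prod_norm_nonneg:
  assumes "u \<in> state_space n d" "v \<in> state_space n d"
  shows "0 \<le> prod_norm n Nrm (state_diff u v)"
  unfolding prod_norm_def state_diff_def
proof (intro sum_nonneg)
  fix i assume i: "i \<in> {1..n}"
  show "0 \<le> Nrm i (u i - v i)"
    using vnorm_nonneg[of "d i" "Nrm i" "u i - v i"] norms i
      state_space_block[OF assms(1) i] state_space_block[OF assms(2) i] by simp
qed

lemma prod_norm_triangle:
  assumes "u \<in> state_space n d" "v \<in> state_space n d" "w \<in> state_space n d"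
  shows "prod_norm n Nrm (state_diff u w)
    \<le> prod_norm n Nrm (state_diff u v) + prod_norm n Nrm (state_diff w v)"
proof -
  have "Nrm i (u i - w i) \<le> Nrm i (u i - v i) + Nrm i (w i - v i)" if i: "i \<in> {1..n}" for i
    using vnorm_diff_triangle[of "d i" "Nrm i" "u i" "v i" "w i"]
      vnorm_minus_commute[of "d i" "Nrm i" "v i" "w i"]
      norms i state_space_block[OF assms(1) i] state_space_block[OF assms(2) i]
      state_space_block[OF assms(3) i]
    by simp
  thus ?thesis unfolding prod_norm_def state_diff_def sum.distrib[symmetric] by (rule sum_mono)
qed

lemma prod_norm_tendsto_0_coordinatewise:
  assumes "\<And>t. w t \<in> state_space n d" "z \<in> state_space n d"
    and "\<forall>i\<in>{1..n}. \<forall>k<d i. (\<lambda>t. w t i $ k) \<longlonglongrightarrow> z i $ k"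
  shows "(\<lambda>t. prod_norm n Nrm (state_diff (w t) z)) \<longlonglongrightarrow> 0"
proof -
  have "(\<lambda>t. \<Sum>i = 1..n. Nrm i (w t i - z i)) \<longlonglongrightarrow> (\<Sum>i = 1..n. 0)"
  proof (intro tendsto_sum)
    fix i assume i: "i \<in> {1..n}"
    show "(\<lambda>t. Nrm i (w t i - z i)) \<longlonglongrightarrow> 0"
      using vnorm_tendsto_0_coordinatewise[of "d i" "Nrm i" "\<lambda>t. w t i" "z i"] norms i assms
        state_space_block[OF assms(1) i] state_space_block[OF assms(2) i] by simp
  qed
  thus ?thesis unfolding prod_norm_def state_diff_def by simp
qed

lemma cont_state_tendsto:
  assumes cont: "cont_state n d Nrm f" and z: "z \<in> state_space n d"
    and w: "\<And>t. w t \<in> state_space n d" and f: "\<And>x. x \<in> state_space n d \<Longrightarrow> f x \<in> state_space n d"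
    and lim: "(\<lambda>t. prod_norm n Nrm (state_diff (w t) z)) \<longlonglongrightarrow> 0"
  shows "(\<lambda>t. prod_norm n Nrm (state_diff (f (w t)) (f z))) \<longlonglongrightarrow> 0"
proof (rule LIMSEQ_I)
  fix e :: real assume "e > 0"
  then obtain \<delta> where \<delta>: "\<delta> > 0" "\<forall>y\<in>state_space n d. prod_norm n Nrm (state_diff y z) < \<delta> \<longrightarrow>
      prod_norm n Nrm (state_diff (f y) (f z)) < e"
    using cont z unfolding cont_state_def by blast
  have nonneg: "0 \<le> prod_norm n Nrm (state_diff (w t) z)"
    "0 \<le> prod_norm n Nrm (state_diff (f (w t)) (f z))" for t
    using prod_norm_nonneg w z f by auto
  obtain T where "\<forall>t\<ge>T. norm (prod_norm n Nrm (state_diff (w t) z) - 0) < \<delta>"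
    using LIMSEQ_D[OF lim \<delta>(1)] by blast
  hence "\<forall>t\<ge>T. prod_norm n Nrm (state_diff (f (w t)) (f z)) < e"
    using \<delta>(2) w nonneg(1) by simp
  thus "\<exists>T. \<forall>t\<ge>T. norm (prod_norm n Nrm (state_diff (f (w t)) (f z)) - 0) < e"
    using nonneg(2) by auto
qed

lemma cont_state_tendsto_common_limit:
  assumes cont: "cont_state n d Nrm f" and f: "\<And>x. x \<in> state_space n d \<Longrightarrow> f x \<in> state_space n d"
    and z: "z \<in> state_space n d" and a: "\<And>t. a t \<in> state_space n d" and b: "\<And>t. b t \<in> state_space n d"
    and lim_a: "\<forall>i\<in>{1..n}. \<forall>k<d i. (\<lambda>t. a t i $ k) \<longlonglongrightarrow> z i $ k"
    and lim_b: "\<forall>i\<in>{1..n}. \<forall>k<d i. (\<lambda>t. b t i $ k) \<longlonglongrightarrow> z i $ k"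
  shows "(\<lambda>t. prod_norm n Nrm (state_diff (f (a t)) (f (b t)))) \<longlonglongrightarrow> 0"
proof (rule real_tendsto_sandwich[where f = "\<lambda>_. 0"])
  have "(\<lambda>t. prod_norm n Nrm (state_diff (f (a t)) (f z))) \<longlonglongrightarrow> 0"
    using cont_state_tendsto[OF cont z a f prod_norm_tendsto_0_coordinatewise[OF a z lim_a]] .
  moreover have "(\<lambda>t. prod_norm n Nrm (state_diff (f (b t)) (f z))) \<longlonglongrightarrow> 0"
    using cont_state_tendsto[OF cont z b f prod_norm_tendsto_0_coordinatewise[OF b z lim_b]] .
  ultimately show "(\<lambda>t. prod_norm n Nrm (state_diff (f (a t)) (f z)) +
      prod_norm n Nrm (state_diff (f (b t)) (f z))) \<longlonglongrightarrow> 0"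
    using tendsto_add by fastforce
qed (use prod_norm_triangle[OF f[OF a] f[OF z] f[OF b]] prod_norm_nonneg[OF f[OF a] f[OF b]] in simp_all)

end

lemma state_bounded_convergent_subseq:
  fixes a :: "nat \<Rightarrow> nat \<Rightarrow> complex vec"
  assumes "\<And>t. a t \<in> state_space n d"
    and "\<forall>i\<in>{1..n}. \<forall>k<d i. \<exists>B. \<forall>t. cmod (a t i $ k) \<le> B"
  shows "\<exists>q z. strict_mono q \<and> z \<in> state_space n d \<and>
    (\<forall>i\<in>{1..n}. \<forall>k<d i. (\<lambda>t. a (q t) i $ k) \<longlonglongrightarrow> z i $ k)"
proof -
  let ?I = "Sigma {1..n} (\<lambda>i. {..<d i})"
  have "\<forall>p\<in>?I. \<exists>B. \<forall>t. cmod (a t (fst p) $ snd p) \<le> B" using assms(2) by auto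
  then obtain q where q: "strict_mono q" "\<forall>p\<in>?I. \<exists>l. (\<lambda>t. a (q t) (fst p) $ snd p) \<longlonglongrightarrow> l"
    using finite_bounded_convergent_subseq[of ?I "\<lambda>t p. a t (fst p) $ snd p"] by auto
  obtain l where "\<forall>p\<in>?I. (\<lambda>t. a (q t) (fst p) $ snd p) \<longlonglongrightarrow> l p"
    using bchoice[OF q(2)] by blast
  hence l: "\<And>i k. i \<in> {1..n} \<Longrightarrow> k < d i \<Longrightarrow> (\<lambda>t. a (q t) i $ k) \<longlonglongrightarrow> l (i, k)" by auto
  define z where "z i = (if i \<in> {1..n} then vec (d i) (\<lambda>k. l (i, k)) else vec 0 (\<lambda>_. 0))" for i
  have "z \<in> state_space n d" unfolding state_space_def z_def by auto
  moreover have "\<forall>i\<in>{1..n}. \<forall>k<d i. (\<lambda>t. a (q t) i $ k) \<longlonglongrightarrow> z i $ k"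
    using l by (simp add: z_def)
  ultimately show ?thesis using q(1) by blast
qed

text \<open>Otherwise some subsequence keeps the images apart; a further subsequence of the bounded
  sequence converges, and continuity at the common limit gives the contradiction.\<close>

lemma cont_state_tendsto_asymptotic:
  assumes norms: "\<forall>i\<in>{1..n}. is_vnorm (d i) (Nrm i)"
    and f: "\<And>x. x \<in> state_space n d \<Longrightarrow> f x \<in> state_space n d" and cont: "cont_state n d Nrm f"
    and a: "\<And>t. a t \<in> state_space n d" and b: "\<And>t. b t \<in> state_space n d"
    and bounded: "\<forall>i\<in>{1..n}. \<forall>k<d i. \<exists>B. \<forall>t. cmod (a t i $ k) \<le> B"
    and asymp: "\<forall>i\<in>{1..n}. \<forall>k<d i. (\<lambda>t. a t i $ k - b t i $ k) \<longlonglongrightarrow> 0"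
  shows "(\<lambda>t. prod_norm n Nrm (state_diff (f (a t)) (f (b t)))) \<longlonglongrightarrow> 0"
proof (rule ccontr)
  define F where "F t = prod_norm n Nrm (state_diff (f (a t)) (f (b t)))" for t
  have F_nonneg: "0 \<le> F t" for t unfolding F_def using prod_norm_nonneg[OF norms f[OF a] f[OF b]] .
  assume "\<not> (\<lambda>t. prod_norm n Nrm (state_diff (f (a t)) (f (b t)))) \<longlonglongrightarrow> 0"
  then obtain e where e: "e > 0" "\<forall>N. \<exists>t\<ge>N. \<not> norm (F t - 0) < e"
    unfolding LIMSEQ_iff F_def by blast
  hence "\<exists>\<^sub>\<infinity>t. e \<le> F t" using F_nonneg by (simp add: INFM_nat_le not_less)
  from infinite_enumerate[OF this[unfolded Inf_many_def]]
  obtain r :: "nat \<Rightarrow> nat" where r: "strict_mono r" "\<And>m. e \<le> F (r m)" by auto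
  have "\<forall>i\<in>{1..n}. \<forall>k<d i. \<exists>B. \<forall>t. cmod (a (r t) i $ k) \<le> B"
    using bounded by (meson order_refl)
  from state_bounded_convergent_subseq[of "\<lambda>t. a (r t)", OF a this]
  obtain s z where s: "strict_mono s" and z: "z \<in> state_space n d"
    and lim_a: "\<forall>i\<in>{1..n}. \<forall>k<d i. (\<lambda>t. a (r (s t)) i $ k) \<longlonglongrightarrow> z i $ k"
    by blast
  have lim_b: "\<forall>i\<in>{1..n}. \<forall>k<d i. (\<lambda>t. b (r (s t)) i $ k) \<longlonglongrightarrow> z i $ k"
  proof (intro ballI allI impI)
    fix i k assume i: "i \<in> {1..n}" and k: "k < d i"
    have "(\<lambda>t. a (r (s t)) i $ k - b (r (s t)) i $ k) \<longlonglongrightarrow> 0"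
      using LIMSEQ_subseq_LIMSEQ[OF asymp[rule_format, OF i k] strict_mono_o[OF r(1) s]]
      by (simp add: comp_def)
    from tendsto_diff[OF lim_a[rule_format, OF i k] this]
    show "(\<lambda>t. b (r (s t)) i $ k) \<longlonglongrightarrow> z i $ k" by simp
  qed
  have "(\<lambda>t. F (r (s t))) \<longlonglongrightarrow> 0"
    unfolding F_def
    by (rule cont_state_tendsto_common_limit[where a = "\<lambda>t. a (r (s t))" and b = "\<lambda>t. b (r (s t))",
          OF norms cont f z a b lim_a lim_b])
  hence "e \<le> 0" using LIMSEQ_le_const[of "\<lambda>t. F (r (s t))" 0 e] r(2) by blast
  thus False using e(1) by simp
qed

section \<open>Conjugated iterates\<close>

lemma funpow_conjugate:
  assumes F: "\<And>x. x \<in> S \<Longrightarrow> F x \<in> S" and G: "\<And>x. x \<in> S \<Longrightarrow> G x \<in> S"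
    and tau: "\<And>x. x \<in> S \<Longrightarrow> tau x \<in> S" and tau_tinv: "\<And>x. x \<in> S \<Longrightarrow> tau (tinv x) = x"
    and conj: "\<And>x. x \<in> S \<Longrightarrow> G x = tinv (F (tau x))" and x: "x \<in> S"
  shows "(F ^^ t) (tau x) = tau ((G ^^ t) x)"
proof (induction t)
  case (Suc t)
  have "(G ^^ t) x \<in> S" using funpow_closed[OF G x] .
  thus ?case using Suc conj F tau tau_tinv by simp
qed simp

lemma (in cascade) NonLin_map_state_space:
  assumes N1: "\<forall>u\<in>carrier_vec (d 1). N1 u \<in> carrier_vec (d 1)"
    and Nf: "\<forall>i\<in>{2..n}. \<forall>u\<in>carrier_vec (d (i - 1)). \<forall>v\<in>carrier_vec (d i). Nf i u v \<in> carrier_vec (d i)"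
    and x: "x \<in> state_space n d"
  shows "NonLin_map n L C N1 Nf x \<in> state_space n d"
proof -
  have "NonLin_map n L C N1 Nf x i \<in> carrier_vec (d i)" if i: "i \<in> {1..n}" for i
  proof (cases "i = 1")
    case True
    thus ?thesis using N1 L_carrier[OF i] state_space_block[OF x i] by (simp add: NonLin_map_def)
  next
    case False
    hence i2: "i \<in> {2..n}" "i - 1 \<in> {1..n}" using i by auto
    have "C i *\<^sub>v x (i - 1) \<in> carrier_vec (d i)" "Nf i (x (i - 1)) (x i) \<in> carrier_vec (d i)"
      using C_carrier[OF i2(1)] Nf i2 state_space_block[OF x i] state_space_block[OF x i2(2)] by auto
    thus ?thesis using L_carrier[OF i] state_space_block[OF x i] i2 False
      by (simp add: NonLin_map_def)
  qed
  thus ?thesis using x unfolding state_space_def NonLin_map_def by auto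
qed

theorem theorem3:
  fixes n :: nat and d :: "nat \<Rightarrow> nat"
    and Nrm :: "nat \<Rightarrow> complex vec \<Rightarrow> real"
    and L V :: "nat \<Rightarrow> complex mat" and C :: "nat \<Rightarrow> complex mat"
    and lam :: "nat \<Rightarrow> nat \<Rightarrow> complex"
    and N1 :: "complex vec \<Rightarrow> complex vec"
    and Nf :: "nat \<Rightarrow> complex vec \<Rightarrow> complex vec \<Rightarrow> complex vec"
    and tau tinv :: "(nat \<Rightarrow> complex vec) \<Rightarrow> (nat \<Rightarrow> complex vec)"
    and y :: "nat \<Rightarrow> complex vec"
  assumes n_pos: "1 \<le> n"
    and d_pos: "\<forall>i\<in>{1..n}. 1 \<le> d i"
    and norms: "\<forall>i\<in>{1..n}. is_vnorm (d i) (Nrm i)"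
    and L_dim: "\<forall>i\<in>{1..n}. L i \<in> carrier_mat (d i) (d i)"
    and C_dim: "\<forall>i\<in>{2..n}. C i \<in> carrier_mat (d i) (d (i - 1))"
    and V_dim: "\<forall>i\<in>{1..n}. V i \<in> carrier_mat (d i) (d i)"
    and L_inv: "\<forall>i\<in>{1..n}. invertible_mat (L i)"
    and V_inv: "\<forall>i\<in>{1..n}. invertible_mat (V i)"
    and diagonalize: "\<forall>i\<in>{1..n}. L i * V i = V i * mat_diag (d i) (lam i)"
    and spec_disj: "\<forall>i\<in>{1..n}. \<forall>j\<in>{1..n}. i \<noteq> j \<longrightarrow> spectrum (L i) \<inter> spectrum (L j) = {}"
    and norm_incr: "\<forall>i\<in>{1..<n}. op_norm (d i) (Nrm i) (L i) < op_norm (d (Suc i)) (Nrm (Suc i)) (L (Suc i))"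
    and norm_le1: "op_norm (d n) (Nrm n) (L n) \<le> 1"
    and N1_dim: "\<forall>u\<in>carrier_vec (d 1). N1 u \<in> carrier_vec (d 1)"
    and Nf_dim: "\<forall>i\<in>{2..n}. \<forall>u\<in>carrier_vec (d (i - 1)). \<forall>v\<in>carrier_vec (d i).
                   Nf i u v \<in> carrier_vec (d i)"
    and homeo: "homeo_state n d Nrm tau tinv"
    and conj: "\<forall>x\<in>state_space n d. Lin_map n L C x = tinv (NonLin_map n L C N1 Nf (tau x))"
    and y_in: "y \<in> state_space n d"
  shows "(\<lambda>t. prod_norm n Nrm
            (state_diff ((NonLin_map n L C N1 Nf ^^ t) y)
                        (((tau \<circ> Nom_map n L \<circ> tinv) ^^ t) ((tau \<circ> pert_map n d L C V lam \<circ> tinv) y))))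
         \<longlonglongrightarrow> 0"
proof -
  interpret norm_ordered_cascade n d L V C lam Nrm
    using L_dim C_dim V_dim L_inv V_inv diagonalize spec_disj norms norm_incr norm_le1
    by unfold_locales auto
  have tau_closed: "\<And>x. x \<in> state_space n d \<Longrightarrow> tau x \<in> state_space n d"
    and tinv_closed: "\<And>x. x \<in> state_space n d \<Longrightarrow> tinv x \<in> state_space n d"
    and tinv_tau: "\<And>x. x \<in> state_space n d \<Longrightarrow> tinv (tau x) = x"
    and tau_tinv: "\<And>x. x \<in> state_space n d \<Longrightarrow> tau (tinv x) = x"
    and cont: "cont_state n d Nrm tau"
    using homeo unfolding homeo_state_def by auto
  define x where "x = tinv y"
  have x: "x \<in> state_space n d" and y: "y = tau x" unfolding x_def using tinv_closed tau_tinv y_in by auto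
  have "(NonLin_map n L C N1 Nf ^^ t) y = tau ((Lin_map n L C ^^ t) x)" for t
    unfolding y using conj
    by (intro funpow_conjugate[where tau = tau and tinv = tinv, OF
          NonLin_map_state_space[OF N1_dim Nf_dim] Lin_map_state_space tau_closed tau_tinv _ x]) auto
  moreover have "((tau \<circ> Nom_map n L \<circ> tinv) ^^ t) (tau (pert_map n d L C V lam x))
      = tau ((Nom_map n L ^^ t) (pert_map n d L C V lam x))" for t
    using tau_closed tinv_closed tinv_tau Nom_map_state_space
    by (intro funpow_conjugate[where F = "tau \<circ> Nom_map n L \<circ> tinv" and tau = tau and tinv = tinv,
          OF _ Nom_map_state_space tau_closed tau_tinv _ pert_map_state_space[OF x]]) auto
  moreover have "(tau \<circ> pert_map n d L C V lam \<circ> tinv) y = tau (pert_map n d L C V lam x)"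
    by (simp add: x_def)
  ultimately show ?thesis
    using cont_state_tendsto_asymptotic[OF norms tau_closed cont
        funpow_closed[OF Lin_map_state_space x]
        funpow_closed[OF Nom_map_state_space pert_map_state_space[OF x]]]
      Lin_iter_bounded[OF x] Lin_iter_minus_Nom_iter_tendsto_0[OF x] by simp
qed

end
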